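(* Consider the inexact Bregman proximal point algorithm described in the context, with $\Phi$ Legendre, twice continuously differentiable on $\operatorname{int}\operatorname{dom}\Phi$ and very strictly convex, and $0\le\rho_k\le\rho<1$. Suppose $\operatorname{zer}T\cap\operatorname{int}\operatorname{dom}\Phi\neq\emptyset$ and that $D_\Phi(z^\star,\cdot)$ is coercive for some $z^\star\in\operatorname{dom}\Phi\cap\operatorname{zer}T$. Then $z^k$ converges to some $z^\infty\in\operatorname{zer}T\cap\operatorname{int}\operatorname{dom}\Phi$. Suppose further that the error bound condition (EB) holds at $z^\infty$ with constants $\delta,\kappa>0$. Then there exist $\varepsilon>0$ with $B_\varepsilon(z^\infty)\subseteq\operatorname{int}\operatorname{dom}\Phi$, constants $0<\theta$, $\Theta<\infty$ with $\|\nabla\Phi(a)-\nabla\Phi(b)\|\le\Theta\|a-b\|$ and $D_\Phi(a,b)\ge\frac{\theta}{2}\|a-b\|^2$ for all $a,b\in B_\varepsilon(z^\infty)$, and an index $k_0$ such that for all $k\ge k_0$ $$\tfrac{1}{C_k}\operatorname{dist}_\Phi(z^{k+1},\operatorname{zer}T)\le D_\Phi(p^k,z^k),\qquad C_k:=\Big(\sqrt{\rho_k}\tfrac{\sqrt\Theta}{\sqrt\theta}+\tfrac{\kappa}{\sigma_k}\Theta(1+\sqrt{\rho_k})\Big)^2\tfrac{\Theta}{\theta}.$$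
   Context: Let $\mathbb{E}$ be a finite-dimensional Euclidean space, $\Gamma_0(\mathbb{E})$ the proper lsc convex functions $\mathbb{E}\to\mathbb{R}\cup\{+\infty\}$. $\Phi\in\Gamma_0(\mathbb{E})$ is Legendre if it is essentially smooth ($\operatorname{int}\operatorname{dom}\Phi\ne\emptyset$, differentiable there, $\|\nabla\Phi(z^\nu)\|\to\infty$ whenever $\operatorname{int}\operatorname{dom}\Phi\ni z^\nu\to z\in\operatorname{bdry}\operatorname{dom}\Phi$) and essentially strictly convex (strictly convex on every convex subset of $\operatorname{dom}\partial\Phi$); then $\nabla\Phi:\operatorname{int}\operatorname{dom}\Phi\to\operatorname{int}\operatorname{dom}\Phi^*$ is a bijection with inverse $\nabla\Phi^*$. Very strictly convex means $\nabla^2\Phi(z)\succ0$ for all $z\in\operatorname{int}\operatorname{dom}\Phi$. $D_\Phi(z_1,z_2)=\Phi(z_1)-\Phi(z_2)-\langle\nabla\Phi(z_2),z_1-z_2\rangle$ if $z_1\in\operatorname{dom}\Phi$, $z_2\in\operatorname{int}\operatorname{dom}\Phi$, and $+\infty$ otherwise. For a closed convex set $Z$, $\operatorname{dist}_\Phi(y,Z)=\inf_{x\in Z}D_\Phi(x,y)$; $\operatorname{dist}(z,Z)$ is the Euclidean distance; $B_\varepsilon(z)$ is the closed Euclidean ball. Let $T:\mathbb{E}\rightrightarrows\mathbb{E}$ be maximal monotone, $\operatorname{zer}T=T^{-1}(0)$ (closed convex), and assume $\operatorname{int}\operatorname{dom}\Phi\cap\operatorname{dom}T\ne\emptyset$.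 Inexact Bregman proximal point algorithm: given $z^0\in\operatorname{int}\operatorname{dom}\Phi$, step sizes $\sigma_k\ge\sigma>0$ and tolerances $\rho_k\in[0,1)$, it generates triples $(z^{k+1},p^k,w^k)$ with $p^k\in\operatorname{dom}\Phi$, $w^k\in T(p^k)$, $\nabla\Phi(z^k)-\sigma_kw^k\in\operatorname{int}\operatorname{dom}\Phi^*$, $z^{k+1}=\nabla\Phi^*(\nabla\Phi(z^k)-\sigma_kw^k)\in\operatorname{int}\operatorname{dom}\Phi$, and $D_\Phi(p^k,z^{k+1})\le\rho_kD_\Phi(p^k,z^k)$. Error bound condition (EB) at $\bar z\in\operatorname{zer}T$: there exist $\delta,\kappa>0$ such that whenever $w\in T(z)$, $\|z-\bar z\|\le\delta$ and $\|w\|\le\delta$, then $\operatorname{dist}(z,\operatorname{zer}T)\le\kappa\|w\|$. A function $h$ is coercive if $h(z)\to\infty$ as $\|z\|\to\infty$. *)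

theory Defs
  imports "HOL-Analysis.Analysis"
begin

definition edom :: "('a \<Rightarrow> ereal) \<Rightarrow> 'a set" where
  "edom \<Phi> = {x. \<Phi> x < \<infinity>}"

definition proper_fun :: "('a \<Rightarrow> ereal) \<Rightarrow> bool" where
  "proper_fun \<Phi> \<longleftrightarrow> (\<forall>x. \<Phi> x \<noteq> -\<infinity>) \<and> edom \<Phi> \<noteq> {}"

definition lsc_fun :: "('a::topological_space \<Rightarrow> ereal) \<Rightarrow> bool" where
  "lsc_fun \<Phi> \<longleftrightarrow> (\<forall>x. \<Phi> x \<le> Liminf (at x) \<Phi>)"

definition convex_efun :: "('a::real_vector \<Rightarrow> ereal) \<Rightarrow> bool" where
  "convex_efun \<Phi> \<longleftrightarrow> (\<forall>x y t. 0 < t \<and> t < 1 \<longrightarrow>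
     \<Phi> (t *\<^sub>R x + (1 - t) *\<^sub>R y) \<le> ereal t * \<Phi> x + ereal (1 - t) * \<Phi> y)"

definition Gamma0 :: "('a::real_normed_vector \<Rightarrow> ereal) \<Rightarrow> bool" where
  "Gamma0 \<Phi> \<longleftrightarrow> proper_fun \<Phi> \<and> lsc_fun \<Phi> \<and> convex_efun \<Phi>"

text \<open>Real part of \<Phi> (meaningful where \<Phi> is finite).\<close>
definition rfun :: "('a \<Rightarrow> ereal) \<Rightarrow> 'a \<Rightarrow> real" where
  "rfun \<Phi> x = real_of_ereal (\<Phi> x)"

definition grad :: "('a::real_inner \<Rightarrow> real) \<Rightarrow> 'a \<Rightarrow> 'a" where
  "grad f z = (SOME g. (f has_derivative (\<lambda>h. g \<bullet> h)) (at z))"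

definition egrad :: "('a::real_inner \<Rightarrow> ereal) \<Rightarrow> 'a \<Rightarrow> 'a" where
  "egrad \<Phi> z = grad (rfun \<Phi>) z"

definition ediff_at :: "('a::real_inner \<Rightarrow> ereal) \<Rightarrow> 'a \<Rightarrow> bool" where
  "ediff_at \<Phi> z \<longleftrightarrow> (\<exists>g. (rfun \<Phi> has_derivative (\<lambda>h. g \<bullet> h)) (at z))"

definition conj_fun :: "('a::real_inner \<Rightarrow> ereal) \<Rightarrow> 'a \<Rightarrow> ereal" where
  "conj_fun \<Phi> y = (SUP x. ereal (x \<bullet> y) - \<Phi> x)"

definition subdiff :: "('a::real_inner \<Rightarrow> ereal) \<Rightarrow> 'a \<Rightarrow> 'a set" where
  "subdiff \<Phi> x = {g. \<Phi> x \<noteq> \<infinity> \<and> \<Phi> x \<noteq> -\<infinity> \<and>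
      (\<forall>y. \<Phi> y \<ge> \<Phi> x + ereal (g \<bullet> (y - x)))}"

definition dom_subdiff :: "('a::real_inner \<Rightarrow> ereal) \<Rightarrow> 'a set" where
  "dom_subdiff \<Phi> = {x. subdiff \<Phi> x \<noteq> {}}"

definition strictly_convex_on_e :: "'a::real_vector set \<Rightarrow> ('a \<Rightarrow> ereal) \<Rightarrow> bool" where
  "strictly_convex_on_e C \<Phi> \<longleftrightarrow> (\<forall>x\<in>C. \<forall>y\<in>C. \<forall>t. x \<noteq> y \<and> 0 < t \<and> t < 1 \<longrightarrow>
     \<Phi> (t *\<^sub>R x + (1 - t) *\<^sub>R y) < ereal t * \<Phi> x + ereal (1 - t) * \<Phi> y)"

definition essentially_smooth :: "('a::euclidean_space \<Rightarrow> ereal) \<Rightarrow> bool" where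
  "essentially_smooth \<Phi> \<longleftrightarrow> interior (edom \<Phi>) \<noteq> {} \<and>
     (\<forall>z\<in>interior (edom \<Phi>). ediff_at \<Phi> z) \<and>
     (\<forall>zs z. (\<forall>n. zs n \<in> interior (edom \<Phi>)) \<longrightarrow> zs \<longlonglongrightarrow> z \<longrightarrow> z \<in> frontier (edom \<Phi>) \<longrightarrow>
        filterlim (\<lambda>n. norm (egrad \<Phi> (zs n))) at_top sequentially)"

definition essentially_strictly_convex :: "('a::euclidean_space \<Rightarrow> ereal) \<Rightarrow> bool" where
  "essentially_strictly_convex \<Phi> \<longleftrightarrow>
     (\<forall>C. convex C \<and> C \<subseteq> dom_subdiff \<Phi> \<longrightarrow> strictly_convex_on_e C \<Phi>)"

definition legendre :: "('a::euclidean_space \<Rightarrow> ereal) \<Rightarrow> bool" where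
  "legendre \<Phi> \<longleftrightarrow> Gamma0 \<Phi> \<and> essentially_smooth \<Phi> \<and> essentially_strictly_convex \<Phi>"

definition C2_int_dom :: "('a::euclidean_space \<Rightarrow> ereal) \<Rightarrow> bool" where
  "C2_int_dom \<Phi> \<longleftrightarrow>
     (\<forall>z\<in>interior (edom \<Phi>). ediff_at \<Phi> z \<and> egrad \<Phi> differentiable (at z)) \<and>
     continuous_on (interior (edom \<Phi>)) (\<lambda>z. Blinfun (frechet_derivative (egrad \<Phi>) (at z)))"

definition very_strictly_convex :: "('a::euclidean_space \<Rightarrow> ereal) \<Rightarrow> bool" where
  "very_strictly_convex \<Phi> \<longleftrightarrow>
     (\<forall>z\<in>interior (edom \<Phi>). \<forall>h. h \<noteq> 0 \<longrightarrow> h \<bullet> frechet_derivative (egrad \<Phi>) (at z) h > 0)"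

definition bregman :: "('a::euclidean_space \<Rightarrow> ereal) \<Rightarrow> 'a \<Rightarrow> 'a \<Rightarrow> ereal" where
  "bregman \<Phi> z1 z2 = (if z1 \<in> edom \<Phi> \<and> z2 \<in> interior (edom \<Phi>)
      then \<Phi> z1 - \<Phi> z2 - ereal (egrad \<Phi> z2 \<bullet> (z1 - z2)) else \<infinity>)"

definition bregman_dist :: "('a::euclidean_space \<Rightarrow> ereal) \<Rightarrow> 'a \<Rightarrow> 'a set \<Rightarrow> ereal" where
  "bregman_dist \<Phi> y Z = (INF x\<in>Z. bregman \<Phi> x y)"

definition coercive :: "('a::real_normed_vector \<Rightarrow> ereal) \<Rightarrow> bool" where
  "coercive h \<longleftrightarrow> (\<forall>M::real. \<exists>R. \<forall>z. norm z \<ge> R \<longrightarrow> h z \<ge> ereal M)"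

definition monotone_op :: "('a::real_inner \<Rightarrow> 'a set) \<Rightarrow> bool" where
  "monotone_op T \<longleftrightarrow> (\<forall>x y u v. u \<in> T x \<longrightarrow> v \<in> T y \<longrightarrow> (x - y) \<bullet> (u - v) \<ge> 0)"

definition maximal_monotone :: "('a::real_inner \<Rightarrow> 'a set) \<Rightarrow> bool" where
  "maximal_monotone T \<longleftrightarrow> monotone_op T \<and>
     (\<forall>S. monotone_op S \<and> (\<forall>x. T x \<subseteq> S x) \<longrightarrow> S = T)"

definition dom_op :: "('a \<Rightarrow> 'b set) \<Rightarrow> 'a set" where
  "dom_op T = {x. T x \<noteq> {}}"

definition zer :: "('a \<Rightarrow> 'b::zero set) \<Rightarrow> 'a set" where
  "zer T = {x. 0 \<in> T x}"

definition error_bound :: "('a::real_normed_vector \<Rightarrow> 'a set) \<Rightarrow> 'a \<Rightarrow> real \<Rightarrow> real \<Rightarrow> bool" where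
  "error_bound T zbar \<delta> \<kappa> \<longleftrightarrow> \<delta> > 0 \<and> \<kappa> > 0 \<and>
     (\<forall>z w. w \<in> T z \<longrightarrow> norm (z - zbar) \<le> \<delta> \<longrightarrow> norm w \<le> \<delta> \<longrightarrow>
        infdist z (zer T) \<le> \<kappa> * norm w)"

definition inexact_bppa ::
  "('a::euclidean_space \<Rightarrow> ereal) \<Rightarrow> ('a \<Rightarrow> 'a set) \<Rightarrow> (nat \<Rightarrow> real) \<Rightarrow> (nat \<Rightarrow> real)
   \<Rightarrow> (nat \<Rightarrow> 'a) \<Rightarrow> (nat \<Rightarrow> 'a) \<Rightarrow> (nat \<Rightarrow> 'a) \<Rightarrow> bool" where
  "inexact_bppa \<Phi> T \<sigma>s \<rho>s z p w \<longleftrightarrow>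
     z 0 \<in> interior (edom \<Phi>) \<and>
     (\<forall>k. p k \<in> edom \<Phi> \<and> w k \<in> T (p k) \<and>
          egrad \<Phi> (z k) - \<sigma>s k *\<^sub>R w k \<in> interior (edom (conj_fun \<Phi>)) \<and>
          z (Suc k) = egrad (conj_fun \<Phi>) (egrad \<Phi> (z k) - \<sigma>s k *\<^sub>R w k) \<and>
          z (Suc k) \<in> interior (edom \<Phi>) \<and>
          bregman \<Phi> (p k) (z (Suc k)) \<le> ereal (\<rho>s k) * bregman \<Phi> (p k) (z k))"

end

theory Submission
  imports Defs
begin

(* Monotonicity of T and the three-point identity for the Bregman distance D make the iterates
   Fejer monotone: D(x, z^{k+1}) <= D(x, z^k) - (1 - rho) D(p^k, z^k) for every zero x in dom Phi.
   So the residuals D(p^k, z^k) are summable, and coercivity bounds (z^k).  The Bregman distance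
   from an interior zero controls |grad Phi(z^k)|, so by essential smoothness every cluster point
   lies in int dom Phi.  There the C^2 kernel with positive definite Hessian makes D comparable to
   the squared norm and grad Phi Lipschitz; hence p^k and z^{k+1} follow z^k, the cluster point is
   a zero (the graph of T is closed), and Fejer monotonicity gives convergence of the whole
   sequence.  For the estimate, let x be the point of zer T nearest to p^k: (EB) and
   sigma_k w^k = grad Phi(z^k) - grad Phi(z^{k+1}) bound |x - z^{k+1}| by a multiple of
   sqrt(D(p^k, z^k)), and the quadratic upper bound on D finishes.
   The update z^{k+1} = grad Phi^*(grad Phi(z^k) - sigma_k w^k) is usable only once grad Phi^* is
   known to invert grad Phi.  This is proved directly: the supremum defining Phi^*(y) is attained
   at a unique x, which lies in int dom Phi (essential smoothness) and satisfies grad Phi(x) = y;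
   as x depends continuously on y, Phi^* is differentiable at y with gradient x. *)

lemma has_real_derivative_along_line:
  assumes "(g has_derivative (\<lambda>v. q \<bullet> v)) (at (a + t *\<^sub>R h))"
  shows "((\<lambda>s. g (a + s *\<^sub>R h)) has_real_derivative (q \<bullet> h)) (at t)"
proof -
  have line: "((\<lambda>s. a + s *\<^sub>R h) has_derivative (\<lambda>s. s *\<^sub>R h)) (at t)"
    by (auto intro!: derivative_eq_intros)
  have "(g has_derivative (\<lambda>v. q \<bullet> v)) (at ((\<lambda>s. a + s *\<^sub>R h) t))"
    using assms by simp
  from diff_chain_at[OF line this]
  have "((g \<circ> (\<lambda>s. a + s *\<^sub>R h)) has_derivative ((\<lambda>v. q \<bullet> v) \<circ> (\<lambda>s. s *\<^sub>R h))) (at t)" .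
  moreover have "((\<lambda>v. q \<bullet> v) \<circ> (\<lambda>s. s *\<^sub>R h)) = (*) (q \<bullet> h)"
    by (auto simp: fun_eq_iff)
  ultimately show ?thesis
    unfolding has_field_derivative_def by (simp add: o_def)
qed

lemma segment_in_convex:
  assumes "convex K" "a \<in> K" "b \<in> K" "t \<in> {0..1}"
  shows "b + t *\<^sub>R (a - b) \<in> K"
proof -
  have "(1 - t) *\<^sub>R b + t *\<^sub>R a \<in> K"
    using assms unfolding convex_alt by auto
  then show ?thesis
    by (simp add: algebra_simps)
qed

lemma eventually_in_cball:
  assumes "xs \<longlonglongrightarrow> c" "0 < r"
  shows "eventually (\<lambda>n. xs n \<in> cball c r) sequentially"
  using tendstoD[OF assms] by eventually_elim (simp add: dist_commute)

lemma tendsto_if_norm_diff_tendsto_zero: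
  fixes xs ys :: "nat \<Rightarrow> 'a::real_normed_vector"
  assumes "ys \<longlonglongrightarrow> c" "(\<lambda>n. norm (xs n - ys n)) \<longlonglongrightarrow> 0"
  shows "xs \<longlonglongrightarrow> c"
  using Lim_transform[OF assms(1)] assms(2) tendsto_norm_zero_iff by blast

lemma decseq_tendsto_zero_if_subseq:
  fixes a :: "nat \<Rightarrow> real"
  assumes "decseq a" "\<And>n. 0 \<le> a n" "strict_mono \<phi>" "(\<lambda>n. a (\<phi> n)) \<longlonglongrightarrow> 0"
  shows "a \<longlonglongrightarrow> 0"
proof -
  obtain L where "a \<longlonglongrightarrow> L"
    using decseq_convergent[OF assms(1), of 0] assms(2) by blast
  moreover have "L = 0"
    using LIMSEQ_subseq_LIMSEQ[OF \<open>a \<longlonglongrightarrow> L\<close> assms(3)] assms(4) LIMSEQ_unique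
    by (auto simp: o_def)
  ultimately show ?thesis
    by simp
qed

lemma quadratic_lower_bound_from_derivative:
  fixes \<phi> g :: "real \<Rightarrow> real"
  assumes \<phi>': "\<And>t. t \<in> {0..1} \<Longrightarrow> (\<phi> has_real_derivative g t) (at t)"
    and growth: "\<And>t. t \<in> {0..1} \<Longrightarrow> c * t \<le> g t - g 0"
  shows "\<phi> 0 + g 0 + c / 2 \<le> \<phi> 1"
proof -
  have "(\<lambda>s. \<phi> s - g 0 * s - c / 2 * s\<^sup>2) 0 \<le> (\<lambda>s. \<phi> s - g 0 * s - c / 2 * s\<^sup>2) 1"
  proof (rule deriv_nonneg_imp_mono[of 0 1])
    fix s :: real assume s: "s \<in> {0..1}"
    show "((\<lambda>s. \<phi> s - g 0 * s - c / 2 * s\<^sup>2) has_real_derivative (g s - g 0 - c * s)) (at s)"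
      using s by (auto intro!: derivative_eq_intros \<phi>' simp: power2_eq_square algebra_simps)
    show "0 \<le> g s - g 0 - c * s"
      using growth[OF s] by simp
  qed simp
  then show ?thesis by simp
qed

lemma quadratic_upper_bound_from_derivative:
  fixes \<phi> g :: "real \<Rightarrow> real"
  assumes \<phi>': "\<And>t. t \<in> {0..1} \<Longrightarrow> (\<phi> has_real_derivative g t) (at t)"
    and growth: "\<And>t. t \<in> {0..1} \<Longrightarrow> g t - g 0 \<le> c * t"
  shows "\<phi> 1 \<le> \<phi> 0 + g 0 + c / 2"
proof -
  have "- \<phi> 0 + - g 0 + - c / 2 \<le> - \<phi> 1"
  proof (rule quadratic_lower_bound_from_derivative)
    fix t :: real assume "t \<in> {0..1}"
    show "((\<lambda>t. - \<phi> t) has_real_derivative - g t) (at t)"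
      using DERIV_minus[OF \<phi>'[OF \<open>t \<in> {0..1}\<close>]] .
    show "- c * t \<le> - g t - - g 0"
      using growth[OF \<open>t \<in> {0..1}\<close>] by simp
  qed
  then show ?thesis by simp
qed

lemma tendsto_zero_from_truncated_quadratic_bound:
  fixes a b :: "nat \<Rightarrow> real"
  assumes "0 < \<theta>" "0 < E" "\<And>n. 0 \<le> a n" "b \<longlonglongrightarrow> 0"
    and bound: "eventually (\<lambda>n. \<theta> / 2 * (min (a n) E)\<^sup>2 \<le> b n) sequentially"
  shows "a \<longlonglongrightarrow> 0"
proof (rule tendstoI)
  fix \<epsilon> :: real assume "\<epsilon> > 0"
  define \<eta> where "\<eta> = min \<epsilon> E"
  have \<eta>: "0 < \<eta>" "\<eta> \<le> \<epsilon>" "\<eta> \<le> E"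
    using \<open>\<epsilon> > 0\<close> \<open>0 < E\<close> by (auto simp: \<eta>_def)
  have "0 < \<theta> / 2 * \<eta>\<^sup>2"
    using \<open>0 < \<theta>\<close> \<eta> by simp
  with \<open>b \<longlonglongrightarrow> 0\<close> have "eventually (\<lambda>n. b n < \<theta> / 2 * \<eta>\<^sup>2) sequentially"
    by (rule order_tendstoD)
  with bound show "eventually (\<lambda>n. dist (a n) 0 < \<epsilon>) sequentially"
  proof eventually_elim
    case (elim n)
    then have "\<theta> / 2 * (min (a n) E)\<^sup>2 < \<theta> / 2 * \<eta>\<^sup>2"
      by linarith
    then have "(min (a n) E)\<^sup>2 < \<eta>\<^sup>2"
      using \<open>0 < \<theta>\<close> by (metis half_gt_zero mult_less_cancel_left_pos)
    then have "min (a n) E < \<eta>"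
      by (rule power_less_imp_less_base) (use \<eta> in simp)
    then show ?case
      using \<eta> \<open>0 \<le> a n\<close> by (auto simp: min_def split: if_splits)
  qed
qed

section \<open>Maximal monotone operators\<close>

lemma maximal_monotone_zero_at_limit:
  fixes T :: "'a::real_inner \<Rightarrow> 'a set"
  assumes mm: "maximal_monotone T" and ps: "ps \<longlonglongrightarrow> x" and ws: "\<And>n. ws n \<in> T (ps n)"
    and "ws \<longlonglongrightarrow> 0"
  shows "0 \<in> T x"
proof -
  have mono: "monotone_op T"
    using mm unfolding maximal_monotone_def by simp
  have limit_mono: "0 \<le> (x - y) \<bullet> (0 - v)" if "v \<in> T y" for y v
  proof -
    have "(\<lambda>n. (ps n - y) \<bullet> (ws n - v)) \<longlonglongrightarrow> (x - y) \<bullet> (0 - v)"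
      by (intro tendsto_intros ps \<open>ws \<longlonglongrightarrow> 0\<close>)
    moreover have "\<forall>n\<ge>0. 0 \<le> (ps n - y) \<bullet> (ws n - v)"
      using mono ws that unfolding monotone_op_def by blast
    ultimately show ?thesis
      by (intro LIMSEQ_le_const) blast+
  qed
  \<comment> \<open>adding \<open>(x, 0)\<close> to the graph keeps it monotone, so by maximality it is already there\<close>
  define S where "S = (\<lambda>y. if y = x then insert 0 (T x) else T y)"
  have S_cases: "u \<in> T a \<or> (a = x \<and> u = 0)" if "u \<in> S a" for u a
    using that unfolding S_def by (auto split: if_splits)
  have "monotone_op S"
    unfolding monotone_op_def
  proof (intro allI impI)
    fix a b u v assume "u \<in> S a" "v \<in> S b"
    then consider "u \<in> T a" "v \<in> T b" | "u \<in> T a" "b = x" "v = 0" | "a = x" "u = 0" "v \<in> T b"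
      | "a = x" "u = 0" "b = x" "v = 0"
      using S_cases by blast
    then show "0 \<le> (a - b) \<bullet> (u - v)"
    proof cases
      case 1
      then show ?thesis using mono unfolding monotone_op_def by blast
    next
      case 2
      then show ?thesis using limit_mono[of u a] by (simp add: inner_diff_left inner_diff_right)
    qed (use limit_mono in auto)
  qed
  moreover have "\<forall>y. T y \<subseteq> S y"
    unfolding S_def by auto
  ultimately have "S = T"
    using mm unfolding maximal_monotone_def by blast
  then show ?thesis
    by (metis S_def insertI1)
qed

lemma closed_zer_maximal_monotone:
  fixes T :: "'a::real_inner \<Rightarrow> 'a set"
  assumes "maximal_monotone T"
  shows "closed (zer T)"
  unfolding closed_sequential_limits
proof (intro allI impI)
  fix xs l assume xs: "(\<forall>n. xs n \<in> zer T) \<and> xs \<longlonglongrightarrow> l"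
  have "0 \<in> T l"
  proof (rule maximal_monotone_zero_at_limit[OF assms])
    show "xs \<longlonglongrightarrow> l" "(\<lambda>_. 0) \<longlonglongrightarrow> 0"
      using xs by auto
    show "\<And>n. 0 \<in> T (xs n)"
      using xs unfolding zer_def by blast
  qed
  then show "l \<in> zer T"
    unfolding zer_def by simp
qed

section \<open>Legendre kernels and their Bregman distance\<close>

locale legendre_kernel =
  fixes \<Phi> :: "'a::euclidean_space \<Rightarrow> ereal"
  assumes legendre_Phi: "legendre \<Phi>"
    and C2_Phi: "C2_int_dom \<Phi>"
    and vsc_Phi: "very_strictly_convex \<Phi>"
begin

abbreviation "f \<equiv> rfun \<Phi>"
abbreviation "U \<equiv> interior (edom \<Phi>)"
abbreviation "G \<equiv> egrad \<Phi>"
abbreviation "H z \<equiv> frechet_derivative G (at z)"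

lemma Phi_not_minf: "\<Phi> x \<noteq> -\<infinity>"
  and edom_nonempty: "edom \<Phi> \<noteq> {}"
  and lsc_Phi: "lsc_fun \<Phi>"
  and convex_Phi: "convex_efun \<Phi>"
  using legendre_Phi unfolding legendre_def Gamma0_def proper_fun_def by auto

lemma Phi_eq_rfun: "x \<in> edom \<Phi> \<Longrightarrow> \<Phi> x = ereal (f x)"
  using Phi_not_minf[of x] unfolding edom_def rfun_def by (cases "\<Phi> x") auto

lemma edom_if_le_ereal: "\<Phi> x \<le> ereal r \<Longrightarrow> x \<in> edom \<Phi>"
  unfolding edom_def using le_less_trans by fastforce

lemma convex_combination_in_edom:
  assumes "x \<in> edom \<Phi>" "y \<in> edom \<Phi>" "0 \<le> t" "t \<le> 1"
  shows "t *\<^sub>R x + (1 - t) *\<^sub>R y \<in> edom \<Phi>"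
    and "f (t *\<^sub>R x + (1 - t) *\<^sub>R y) \<le> t * f x + (1 - t) * f y"
proof -
  have "t *\<^sub>R x + (1 - t) *\<^sub>R y \<in> edom \<Phi> \<and> f (t *\<^sub>R x + (1 - t) *\<^sub>R y) \<le> t * f x + (1 - t) * f y"
  proof (cases "t = 0 \<or> t = 1")
    case True
    then show ?thesis using assms by auto
  next
    case False
    then have "\<Phi> (t *\<^sub>R x + (1 - t) *\<^sub>R y) \<le> ereal t * \<Phi> x + ereal (1 - t) * \<Phi> y"
      using convex_Phi assms unfolding convex_efun_def by simp
    also have "\<dots> = ereal (t * f x + (1 - t) * f y)"
      using Phi_eq_rfun assms by simp
    finally show ?thesis
      using Phi_eq_rfun[OF edom_if_le_ereal] edom_if_le_ereal by fastforce
  qed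
  then show "t *\<^sub>R x + (1 - t) *\<^sub>R y \<in> edom \<Phi>"
    and "f (t *\<^sub>R x + (1 - t) *\<^sub>R y) \<le> t * f x + (1 - t) * f y"
    by auto
qed

lemma convex_edom: "convex (edom \<Phi>)"
  unfolding convex_alt using convex_combination_in_edom(1) by (metis add.commute)

lemma convex_U: "convex U"
  by (rule convex_interior[OF convex_edom])

lemma U_subset_edom: "U \<subseteq> edom \<Phi>"
  by (rule interior_subset)

lemma essentially_smooth_Phi: "essentially_smooth \<Phi>"
  using legendre_Phi unfolding legendre_def by auto

lemma U_nonempty: "U \<noteq> {}"
  using essentially_smooth_Phi unfolding essentially_smooth_def by auto

lemma has_derivative_f: "z \<in> U \<Longrightarrow> (f has_derivative (\<lambda>h. G z \<bullet> h)) (at z)"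
  using essentially_smooth_Phi someI_ex[of "\<lambda>g. (f has_derivative (\<lambda>h. g \<bullet> h)) (at z)"]
  unfolding essentially_smooth_def ediff_at_def egrad_def grad_def by blast

lemma continuous_on_f: "continuous_on U f"
  using has_derivative_continuous[OF has_derivative_f]
  by (intro continuous_at_imp_continuous_on) blast

lemma gradient_inequality:
  assumes z: "z \<in> U" and x: "x \<in> edom \<Phi>"
  shows "f z + G z \<bullet> (x - z) \<le> f x"
proof -
  define \<phi> where "\<phi> = (\<lambda>t. f (z + t *\<^sub>R (x - z)))"
  have "(\<phi> has_real_derivative (G z \<bullet> (x - z))) (at 0)"
    unfolding \<phi>_def by (rule has_real_derivative_along_line) (use has_derivative_f[OF z] in simp)
  then have "((\<lambda>t. (\<phi> t - \<phi> 0) / (t - 0)) \<longlongrightarrow> G z \<bullet> (x - z)) (at_right 0)"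
    by (simp only: has_field_derivative_iff) (rule tendsto_mono[OF at_le[OF subset_UNIV]])
  moreover have "eventually (\<lambda>t. (\<phi> t - \<phi> 0) / (t - 0) \<le> f x - f z) (at_right 0)"
    unfolding eventually_at_right_field
  proof (intro exI[of _ 1] conjI allI impI)
    fix t :: real assume "0 < t" "t < 1"
    moreover have "z + t *\<^sub>R (x - z) = t *\<^sub>R x + (1 - t) *\<^sub>R z"
      by (simp add: algebra_simps)
    ultimately have "\<phi> t - \<phi> 0 \<le> t * (f x - f z)"
      using convex_combination_in_edom(2)[OF x, of z t] z U_subset_edom
      unfolding \<phi>_def by (auto simp: algebra_simps)
    then show "(\<phi> t - \<phi> 0) / (t - 0) \<le> f x - f z"
      using \<open>0 < t\<close> by (simp add: divide_le_eq mult.commute)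
  qed simp
  ultimately have "G z \<bullet> (x - z) \<le> f x - f z"
    by (rule tendsto_upperbound) simp
  then show ?thesis by simp
qed

definition D :: "'a \<Rightarrow> 'a \<Rightarrow> real" where
  "D x z = f x - f z - G z \<bullet> (x - z)"

lemma bregman_eq_D: "x \<in> edom \<Phi> \<Longrightarrow> z \<in> U \<Longrightarrow> bregman \<Phi> x z = ereal (D x z)"
  unfolding bregman_def D_def using Phi_eq_rfun U_subset_edom by auto

lemma D_nonneg: "x \<in> edom \<Phi> \<Longrightarrow> z \<in> U \<Longrightarrow> 0 \<le> D x z"
  using gradient_inequality unfolding D_def by fastforce

lemma gradient_monotone:
  assumes "a \<in> U" "b \<in> U"
  shows "0 \<le> (G a - G b) \<bullet> (a - b)"
proof -
  have "f a + G a \<bullet> (b - a) \<le> f b" "f b + G b \<bullet> (a - b) \<le> f a"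
    using gradient_inequality assms U_subset_edom by auto
  moreover have "(G a - G b) \<bullet> (a - b) = - (G a \<bullet> (b - a)) - G b \<bullet> (a - b)"
    by (simp add: inner_diff_left inner_diff_right)
  ultimately show ?thesis by linarith
qed

lemma has_derivative_G: "z \<in> U \<Longrightarrow> (G has_derivative H z) (at z)"
  using C2_Phi unfolding C2_int_dom_def by (simp add: frechet_derivative_works)

lemma bounded_linear_H: "z \<in> U \<Longrightarrow> bounded_linear (H z)"
  using has_derivative_G has_derivative_bounded_linear by blast

lemma continuous_on_H: "continuous_on U (\<lambda>z. Blinfun (H z))"
  using C2_Phi unfolding C2_int_dom_def by simp

lemma H_pos_def: "z \<in> U \<Longrightarrow> h \<noteq> 0 \<Longrightarrow> 0 < h \<bullet> H z h"
  using vsc_Phi unfolding very_strictly_convex_def by blast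

lemma continuous_on_G: "continuous_on U G"
  using has_derivative_continuous[OF has_derivative_G]
  by (intro continuous_at_imp_continuous_on) blast

lemma has_real_derivative_G_along_line:
  assumes "b + t *\<^sub>R h \<in> U"
  shows "((\<lambda>s. G (b + s *\<^sub>R h) \<bullet> h) has_real_derivative (h \<bullet> H (b + t *\<^sub>R h) h)) (at t)"
proof -
  let ?p = "b + t *\<^sub>R h"
  interpret bounded_linear "H ?p"
    using bounded_linear_H[OF assms] .
  have line: "((\<lambda>s. b + s *\<^sub>R h) has_derivative (\<lambda>s. s *\<^sub>R h)) (at t)"
    by (auto intro!: derivative_eq_intros)
  have "(G has_derivative H ?p) (at ((\<lambda>s. b + s *\<^sub>R h) t))"
    using has_derivative_G[OF assms] by simp
  from diff_chain_at[OF line this]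
  have "((G \<circ> (\<lambda>s. b + s *\<^sub>R h)) has_derivative (H ?p \<circ> (\<lambda>s. s *\<^sub>R h))) (at t)" .
  then have "((\<lambda>s. G (b + s *\<^sub>R h) \<bullet> h) has_derivative (\<lambda>s. H ?p (s *\<^sub>R h) \<bullet> h)) (at t)"
    using has_derivative_inner_left by (force simp: o_def)
  moreover have "(\<lambda>s. H ?p (s *\<^sub>R h) \<bullet> h) = (*) (h \<bullet> H ?p h)"
    by (simp add: fun_eq_iff scaleR inner_commute)
  ultimately show ?thesis
    unfolding has_field_derivative_def by simp
qed

section \<open>Local quadratic bounds for the Bregman distance\<close>

lemma blinfun_H: "z \<in> U \<Longrightarrow> blinfun_apply (Blinfun (H z)) = H z"
  using bounded_linear_Blinfun_apply[OF bounded_linear_H] by blast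

lemma onorm_H_bounded_on_compact:
  assumes K: "compact K" "K \<subseteq> U" "K \<noteq> {}"
  obtains \<Theta> where "\<And>z. z \<in> K \<Longrightarrow> onorm (H z) \<le> \<Theta>"
proof -
  obtain z1 where z1: "\<And>z. z \<in> K \<Longrightarrow> norm (Blinfun (H z)) \<le> norm (Blinfun (H z1))"
    using continuous_attains_sup[OF K(1,3) continuous_on_norm[OF continuous_on_subset[OF continuous_on_H K(2)]]]
    by blast
  have "onorm (H z) \<le> norm (Blinfun (H z1))" if "z \<in> K" for z
  proof -
    have "onorm (H z) = norm (Blinfun (H z))"
      using blinfun_H[of z] that K(2) by (auto simp: norm_blinfun.rep_eq)
    then show ?thesis
      using z1[OF that] by simp
  qed
  then show ?thesis
    using that by blast
qed

lemma H_uniformly_pos_def_on_compact: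
  assumes K: "compact K" "K \<subseteq> U" "K \<noteq> {}"
  obtains \<theta> where "0 < \<theta>" "\<And>z h. z \<in> K \<Longrightarrow> \<theta> * (norm h)\<^sup>2 \<le> h \<bullet> H z h"
proof -
  let ?S = "K \<times> sphere (0::'a) 1"
  have S: "compact ?S" "?S \<noteq> {}"
    using K by (auto intro!: compact_Times)
  have "continuous_on ?S (\<lambda>p. snd p \<bullet> blinfun_apply (Blinfun (H (fst p))) (snd p))"
    by (intro continuous_intros continuous_on_compose2[OF continuous_on_subset[OF continuous_on_H K(2)]])
      auto
  from continuous_attains_inf[OF S this]
  obtain p0 where p0: "p0 \<in> ?S" "\<And>p. p \<in> ?S \<Longrightarrow>
      snd p0 \<bullet> blinfun_apply (Blinfun (H (fst p0))) (snd p0)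
        \<le> snd p \<bullet> blinfun_apply (Blinfun (H (fst p))) (snd p)"
    by blast
  have p0_mem: "fst p0 \<in> K" "snd p0 \<noteq> 0"
    using p0(1) by auto
  define \<theta> where "\<theta> = snd p0 \<bullet> H (fst p0) (snd p0)"
  have \<theta>_min: "\<theta> \<le> u \<bullet> H z u" if "z \<in> K" "norm u = 1" for z u
  proof -
    have "z \<in> U" "fst p0 \<in> U"
      using that(1) p0_mem(1) K(2) by auto
    then show ?thesis
      using p0(2)[of "(z, u)"] that unfolding \<theta>_def by (simp add: blinfun_H)
  qed
  have "0 < \<theta>"
    using H_pos_def p0_mem K(2) unfolding \<theta>_def by blast
  moreover have "\<theta> * (norm h)\<^sup>2 \<le> h \<bullet> H z h" if z: "z \<in> K" for z h
  proof -
    interpret bounded_linear "H z"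
      using bounded_linear_H z K(2) by blast
    show ?thesis
    proof (cases "h = 0")
      case False
      define u where "u = h /\<^sub>R norm h"
      have "h = norm h *\<^sub>R u"
        using False by (simp add: u_def)
      then have "h \<bullet> H z h = (norm h)\<^sup>2 * (u \<bullet> H z u)"
        by (metis inner_scaleR_left inner_scaleR_right mult.assoc power2_eq_square scaleR)
      moreover have "\<theta> \<le> u \<bullet> H z u"
        by (rule \<theta>_min[OF z]) (use False in \<open>simp add: u_def\<close>)
      ultimately show ?thesis
        by (metis mult.commute mult_left_mono zero_le_power2)
    qed (simp add: zero)
  qed
  ultimately show ?thesis
    using that by blast
qed

lemma G_lipschitz_on_convex:
  assumes "convex K" "K \<subseteq> U" "\<And>z. z \<in> K \<Longrightarrow> onorm (H z) \<le> \<Theta>" "a \<in> K" "b \<in> K"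
  shows "norm (G a - G b) \<le> \<Theta> * norm (a - b)"
  by (rule differentiable_bound[OF assms(1) _ assms(3-5)])
    (use has_derivative_G assms(2) has_derivative_at_withinI in blast)

lemma G_strongly_monotone_on_convex:
  assumes "convex K" "K \<subseteq> U" and hess: "\<And>z h. z \<in> K \<Longrightarrow> \<theta> * (norm h)\<^sup>2 \<le> h \<bullet> H z h"
    and "a \<in> K" "b \<in> K"
  shows "\<theta> * (norm (a - b))\<^sup>2 \<le> (G a - G b) \<bullet> (a - b)"
proof -
  define h where "h = a - b"
  have in_K: "b + s *\<^sub>R h \<in> K" if "s \<in> {0..1}" for s
    unfolding h_def using segment_in_convex assms(1,4,5) that .
  have "(\<lambda>s. G (b + s *\<^sub>R h) \<bullet> h - \<theta> * (norm h)\<^sup>2 * s) 0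
      \<le> (\<lambda>s. G (b + s *\<^sub>R h) \<bullet> h - \<theta> * (norm h)\<^sup>2 * s) 1"
  proof (rule deriv_nonneg_imp_mono[of 0 1])
    fix s :: real assume s: "s \<in> {0..1}"
    show "((\<lambda>s. G (b + s *\<^sub>R h) \<bullet> h - \<theta> * (norm h)\<^sup>2 * s) has_real_derivative
        (h \<bullet> H (b + s *\<^sub>R h) h - \<theta> * (norm h)\<^sup>2)) (at s)"
      using in_K[OF s] assms(2) by (auto intro!: derivative_eq_intros has_real_derivative_G_along_line)
    show "0 \<le> h \<bullet> H (b + s *\<^sub>R h) h - \<theta> * (norm h)\<^sup>2"
      using hess[OF in_K[OF s]] by simp
  qed simp
  then show ?thesis
    by (simp add: h_def inner_diff_left)
qed

lemma D_quadratic_bounds: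
  assumes "convex K" "K \<subseteq> U" "a \<in> K" "b \<in> K"
    and strong: "\<And>x y. x \<in> K \<Longrightarrow> y \<in> K \<Longrightarrow> \<theta> * (norm (x - y))\<^sup>2 \<le> (G x - G y) \<bullet> (x - y)"
    and lip: "\<And>x y. x \<in> K \<Longrightarrow> y \<in> K \<Longrightarrow> norm (G x - G y) \<le> \<Theta> * norm (x - y)"
  shows "\<theta> / 2 * (norm (a - b))\<^sup>2 \<le> D a b" and "D a b \<le> \<Theta> / 2 * (norm (a - b))\<^sup>2"
proof -
  define h where "h = a - b"
  define \<phi> where "\<phi> = (\<lambda>s. f (b + s *\<^sub>R h))"
  define g where "g = (\<lambda>s. G (b + s *\<^sub>R h) \<bullet> h)"
  have in_K: "b + t *\<^sub>R h \<in> K" if "t \<in> {0..1}" for t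
    unfolding h_def using segment_in_convex assms(1,3,4) that .
  have \<phi>': "(\<phi> has_real_derivative g t) (at t)" if "t \<in> {0..1}" for t
    unfolding \<phi>_def g_def
    by (rule has_real_derivative_along_line) (use has_derivative_f in_K[OF that] assms(2) in blast)
  have g_diff: "t * (g t - g 0) = (G (b + t *\<^sub>R h) - G b) \<bullet> (t *\<^sub>R h)" for t
    unfolding g_def by (simp add: inner_diff_left)
  have growth_lower: "\<theta> * (norm h)\<^sup>2 * t \<le> g t - g 0" if t: "t \<in> {0..1}" for t
  proof (cases "t = 0")
    case False
    have "t * (\<theta> * (norm h)\<^sup>2 * t) = \<theta> * (norm (t *\<^sub>R h))\<^sup>2"
      using t by (simp add: power2_eq_square)
    also have "\<dots> \<le> t * (g t - g 0)"
      unfolding g_diff using strong[OF in_K[OF t] assms(4)] by simp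
    finally show ?thesis
      using t False by simp
  qed simp
  have growth_upper: "g t - g 0 \<le> \<Theta> * (norm h)\<^sup>2 * t" if t: "t \<in> {0..1}" for t
  proof -
    have "g t - g 0 \<le> norm (G (b + t *\<^sub>R h) - G b) * norm h"
      unfolding g_def using norm_cauchy_schwarz[of "G (b + t *\<^sub>R h) - G b" h]
      by (simp add: inner_diff_left)
    also have "\<dots> \<le> \<Theta> * norm (t *\<^sub>R h) * norm h"
      using lip[OF in_K[OF t] assms(4)] by (simp add: mult_right_mono)
    also have "\<dots> = \<Theta> * (norm h)\<^sup>2 * t"
      using t by (simp add: power2_eq_square)
    finally show ?thesis .
  qed
  have D_eq: "D a b = \<phi> 1 - \<phi> 0 - g 0"
    unfolding D_def \<phi>_def g_def h_def by simp
  show "\<theta> / 2 * (norm (a - b))\<^sup>2 \<le> D a b"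
    using quadratic_lower_bound_from_derivative[OF \<phi>' growth_lower] unfolding D_eq h_def by simp
  show "D a b \<le> \<Theta> / 2 * (norm (a - b))\<^sup>2"
    using quadratic_upper_bound_from_derivative[OF \<phi>' growth_upper] unfolding D_eq h_def by simp
qed

lemma local_quadratic_bounds:
  assumes "0 < e" and ball: "cball c e \<subseteq> U"
  obtains \<theta> \<Theta> where "0 < \<theta>" "\<theta> \<le> \<Theta>"
    and "\<And>a b. a \<in> cball c e \<Longrightarrow> b \<in> cball c e \<Longrightarrow> norm (G a - G b) \<le> \<Theta> * norm (a - b)"
    and "\<And>a b. a \<in> cball c e \<Longrightarrow> b \<in> cball c e \<Longrightarrow> \<theta> / 2 * (norm (a - b))\<^sup>2 \<le> D a b"
    and "\<And>a b. a \<in> cball c e \<Longrightarrow> b \<in> cball c e \<Longrightarrow> D a b \<le> \<Theta> / 2 * (norm (a - b))\<^sup>2"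
proof -
  have K: "compact (cball c e)" "cball c e \<subseteq> U" "cball c e \<noteq> {}"
    using ball \<open>0 < e\<close> by auto
  obtain \<Theta>\<^sub>0 where onorm: "\<And>z. z \<in> cball c e \<Longrightarrow> onorm (H z) \<le> \<Theta>\<^sub>0"
    using onorm_H_bounded_on_compact[OF K] by blast
  obtain \<theta> where "0 < \<theta>" and hess: "\<And>z h. z \<in> cball c e \<Longrightarrow> \<theta> * (norm h)\<^sup>2 \<le> h \<bullet> H z h"
    using H_uniformly_pos_def_on_compact[OF K] by blast
  define \<Theta> where "\<Theta> = max \<Theta>\<^sub>0 \<theta>"
  have "onorm (H z) \<le> \<Theta>" if "z \<in> cball c e" for z
    using onorm[OF that] unfolding \<Theta>_def by (rule max.coboundedI1)
  then have lip: "norm (G a - G b) \<le> \<Theta> * norm (a - b)"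
    if "a \<in> cball c e" "b \<in> cball c e" for a b
    using G_lipschitz_on_convex[OF convex_cball ball _ that] by blast
  have strong: "\<theta> * (norm (a - b))\<^sup>2 \<le> (G a - G b) \<bullet> (a - b)"
    if "a \<in> cball c e" "b \<in> cball c e" for a b
    using G_strongly_monotone_on_convex[OF convex_cball ball hess that] .
  show ?thesis
  proof (rule that)
    show "0 < \<theta>" "\<theta> \<le> \<Theta>"
      using \<open>0 < \<theta>\<close> by (simp_all add: \<Theta>_def)
    fix a b assume ab: "a \<in> cball c e" "b \<in> cball c e"
    show "norm (G a - G b) \<le> \<Theta> * norm (a - b)"
      using lip[OF ab] .
    show "\<theta> / 2 * (norm (a - b))\<^sup>2 \<le> D a b" "D a b \<le> \<Theta> / 2 * (norm (a - b))\<^sup>2"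
      using D_quadratic_bounds[OF convex_cball ball ab strong lip] by blast+
  qed
qed

lemma D_three_point: "D x z = D x y + D y z + (G y - G z) \<bullet> (x - y)"
  unfolding D_def by (simp add: inner_diff_left inner_diff_right)

lemma D_mono_along_segment:
  assumes p: "p \<in> U" and z: "z \<in> U" and t: "t \<in> {0..1}"
  shows "D p (p + t *\<^sub>R (z - p)) \<le> D p z"
proof -
  define q where "q = p + t *\<^sub>R (z - p)"
  have q: "q \<in> U"
    unfolding q_def using segment_in_convex[OF convex_U z p t] .
  have "0 \<le> (G z - G q) \<bullet> (z - q)"
    using gradient_monotone[OF z q] .
  moreover have "z - q = (1 - t) *\<^sub>R (z - p)"
    by (simp add: q_def algebra_simps)
  ultimately have "0 \<le> (1 - t) * ((G z - G q) \<bullet> (z - p))"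
    by simp
  moreover have "(G q - G z) \<bullet> (p - q) = t * ((G z - G q) \<bullet> (z - p))"
    by (simp add: q_def inner_diff_left inner_diff_right algebra_simps)
  ultimately have "0 \<le> (G q - G z) \<bullet> (p - q)"
    using t by (cases "t = 1") (auto simp: q_def zero_le_mult_iff)
  moreover have "0 \<le> D q z"
    using D_nonneg q z U_subset_edom by auto
  ultimately show ?thesis
    using D_three_point[of p z q] unfolding q_def by linarith
qed

lemma truncated_quadratic_le_D_left:
  assumes "0 < e" and ball: "cball c e \<subseteq> U"
    and quad: "\<And>a b. a \<in> cball c e \<Longrightarrow> b \<in> cball c e \<Longrightarrow> \<theta> / 2 * (norm (a - b))\<^sup>2 \<le> D a b"
    and z: "z \<in> cball c (e / 2)" and p: "p \<in> edom \<Phi>"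
  shows "\<theta> / 2 * (min (norm (p - z)) (e / 2))\<^sup>2 \<le> D p z"
proof (cases "norm (p - z) \<le> e / 2")
  case True
  then have "p \<in> cball c (e / 2 + e / 2)"
    using cball_trans[OF z, of p "e / 2"] by (simp add: dist_norm norm_minus_commute)
  then have "p \<in> cball c e"
    by simp
  moreover have "z \<in> cball c e"
    using z \<open>0 < e\<close> by simp
  ultimately show ?thesis
    using quad[of p z] True by (simp add: min_def)
next
  case False
  \<comment> \<open>\<open>D (\<cdot>) z\<close> is convex and vanishes at \<open>z\<close>, so it grows along the segment from \<open>z\<close> to \<open>p\<close>\<close>
  define s where "s = (e / 2) / norm (p - z)"
  have pos: "0 < norm (p - z)"
    using False \<open>0 < e\<close> by linarith
  then have s: "0 < s" "s \<le> 1"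
    using False \<open>0 < e\<close> by (auto simp: s_def field_simps)
  define q where "q = s *\<^sub>R p + (1 - s) *\<^sub>R z"
  have zU: "z \<in> U"
    using z ball \<open>0 < e\<close> by auto
  have qz: "q - z = s *\<^sub>R (p - z)"
    by (simp add: q_def algebra_simps)
  have norm_qz: "norm (q - z) = e / 2"
    using pos \<open>0 < e\<close> by (simp add: qz s_def)
  have "q \<in> cball c (e / 2 + e / 2)"
    using cball_trans[OF z, of q "e / 2"] norm_qz by (simp add: dist_norm norm_minus_commute)
  then have "q \<in> cball c e"
    by simp
  moreover have "z \<in> cball c e"
    using z \<open>0 < e\<close> by simp
  ultimately have "\<theta> / 2 * (e / 2)\<^sup>2 \<le> D q z"
    using quad[of q z] norm_qz by simp
  also have "D q z \<le> s * D p z"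
    using convex_combination_in_edom(2)[OF p, of z s] zU U_subset_edom s
    unfolding D_def qz q_def[symmetric] by (auto simp: algebra_simps)
  also have "\<dots> \<le> D p z"
    using s D_nonneg[OF p zU] by (simp add: mult_left_le_one_le)
  finally show ?thesis
    using False by (simp add: min_def)
qed

lemma truncated_quadratic_le_D_right:
  assumes "0 < e" and ball: "cball c e \<subseteq> U"
    and quad: "\<And>a b. a \<in> cball c e \<Longrightarrow> b \<in> cball c e \<Longrightarrow> \<theta> / 2 * (norm (a - b))\<^sup>2 \<le> D a b"
    and p: "p \<in> cball c (e / 2)" and z: "z \<in> U"
  shows "\<theta> / 2 * (min (norm (p - z)) (e / 2))\<^sup>2 \<le> D p z"
proof (cases "norm (p - z) \<le> e / 2")
  case True
  then have "z \<in> cball c (e / 2 + e / 2)"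
    using cball_trans[OF p, of z "e / 2"] by (simp add: dist_norm)
  then have "z \<in> cball c e"
    by simp
  moreover have "p \<in> cball c e"
    using p \<open>0 < e\<close> by simp
  ultimately show ?thesis
    using quad[of p z] True by (simp add: min_def)
next
  case False
  define t where "t = (e / 2) / norm (z - p)"
  have pos: "0 < norm (z - p)"
    using False \<open>0 < e\<close> norm_minus_commute[of z p] by linarith
  then have t: "t \<in> {0..1}"
    using False \<open>0 < e\<close> by (auto simp: t_def field_simps norm_minus_commute)
  define q where "q = p + t *\<^sub>R (z - p)"
  have norm_qp: "norm (q - p) = e / 2"
    using pos \<open>0 < e\<close> by (simp add: q_def t_def)
  have "q \<in> cball c (e / 2 + e / 2)"
    using cball_trans[OF p, of q "e / 2"] norm_qp by (simp add: dist_norm norm_minus_commute)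
  then have "q \<in> cball c e"
    by simp
  moreover have "p \<in> cball c e"
    using p \<open>0 < e\<close> by simp
  ultimately have "\<theta> / 2 * (e / 2)\<^sup>2 \<le> D p q"
    using quad[of p q] norm_qp norm_minus_commute[of p q] by simp
  also have "D p q \<le> D p z"
    unfolding q_def using D_mono_along_segment[OF _ z t] \<open>p \<in> cball c e\<close> ball by blast
  finally show ?thesis
    using False by (simp add: min_def)
qed

lemma D_le_zero_imp_eq:
  assumes x: "x \<in> U" and x': "x' \<in> edom \<Phi>" and "D x' x \<le> 0"
  shows "x' = x"
proof -
  obtain e where e: "0 < e" "cball x e \<subseteq> U"
    using open_interior x open_contains_cball by blast
  obtain \<theta> where "0 < \<theta>"
    and quad: "\<And>a b. a \<in> cball x e \<Longrightarrow> b \<in> cball x e \<Longrightarrow> \<theta> / 2 * (norm (a - b))\<^sup>2 \<le> D a b"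
    using local_quadratic_bounds[OF e] by metis
  have "\<theta> / 2 * (min (norm (x' - x)) (e / 2))\<^sup>2 \<le> D x' x"
    by (rule truncated_quadratic_le_D_left[where c = x]) (use e quad x' in auto)
  then have "\<theta> / 2 * (min (norm (x' - x)) (e / 2))\<^sup>2 \<le> 0"
    using \<open>D x' x \<le> 0\<close> by linarith
  then have "min (norm (x' - x)) (e / 2) = 0"
    using \<open>0 < \<theta>\<close> by (simp add: mult_le_0_iff)
  then show ?thesis
    using e(1) by (simp add: min_def split: if_splits)
qed

lemma Phi_le_limit:
  assumes xs: "xs \<longlonglongrightarrow> x" and le: "\<And>n. \<Phi> (xs n) \<le> ereal (g n)" and g: "g \<longlonglongrightarrow> L"
  shows "\<Phi> x \<le> ereal L"
proof (rule ccontr)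
  assume "\<not> \<Phi> x \<le> ereal L"
  then obtain a where a: "L < a" "ereal a < \<Phi> x"
    using ereal_dense2 not_le by (metis less_ereal.simps(1))
  have "ereal a < Liminf (at x) \<Phi>"
    using a(2) lsc_Phi unfolding lsc_fun_def by (meson order_less_le_trans)
  then have "eventually (\<lambda>u. ereal a < \<Phi> u) (at x)"
    by (rule less_LiminfD)
  then have "eventually (\<lambda>u. ereal a < \<Phi> u) (nhds x)"
    using a(2) by (simp add: eventually_at_topological eventually_nhds) metis
  then have "eventually (\<lambda>n. ereal a < \<Phi> (xs n)) sequentially"
    using xs by (rule filterlim_iff[THEN iffD1, rule_format, rotated])
  moreover have "eventually (\<lambda>n. g n < a) sequentially"
    using g a(1) by (rule order_tendstoD)
  ultimately obtain n where n: "ereal a < \<Phi> (xs n)" "g n < a"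
    using eventually_happens'[OF sequentially_bot] eventually_conj by blast
  then have "\<Phi> (xs n) < ereal a"
    using order.strict_trans1[OF le[of n], of "ereal a"] by simp
  then show False
    using n(1) by simp
qed

lemma D_bounds_norm_G:
  assumes x: "x \<in> U"
  obtains r M where "0 < r" "\<And>z. z \<in> U \<Longrightarrow> f x - M + r * norm (G z) \<le> D x z"
proof -
  obtain r where r: "0 < r" "cball x r \<subseteq> U"
    using open_interior x open_contains_cball by blast
  obtain m where m: "\<And>u. u \<in> cball x r \<Longrightarrow> f u \<le> f m"
    using continuous_attains_sup[OF compact_cball _ continuous_on_subset[OF continuous_on_f r(2)]] r(1)
    by fastforce
  \<comment> \<open>test the gradient inequality at \<open>z\<close> against the point of the ball in direction \<open>G z\<close>\<close>
  have "f x - f m + r * norm (G z) \<le> D x z" if z: "z \<in> U" for z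
  proof -
    define u where "u = x + (r / norm (G z)) *\<^sub>R G z"
    have "f z + G z \<bullet> (x - z) \<le> f x"
      using gradient_inequality z x U_subset_edom by blast
    moreover have "norm (u - x) \<le> r"
      using r(1) by (cases "G z = 0") (simp_all add: u_def)
    then have "u \<in> cball x r"
      by (simp add: dist_norm norm_minus_commute)
    then have "f z + G z \<bullet> (u - z) \<le> f m"
      using gradient_inequality[OF z, of u] r(2) U_subset_edom m by force
    moreover have "G z \<bullet> (u - z) = G z \<bullet> (x - z) + r * norm (G z)"
      by (cases "G z = 0")
        (simp_all add: u_def inner_diff_right inner_add_right power2_norm_eq_inner[symmetric] power2_eq_square)
    moreover have "f x \<le> f m"
      using m[of x] r(1) by simp
    ultimately show ?thesis
      unfolding D_def by (cases "G z = 0") auto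
  qed
  then show ?thesis
    using that r(1) by blast
qed

lemma limit_in_U_if_G_bounded:
  assumes "\<And>n. zs n \<in> U" "zs \<longlonglongrightarrow> z" "\<And>n. norm (G (zs n)) \<le> B"
  shows "z \<in> U"
proof (rule ccontr)
  assume "z \<notin> U"
  moreover have "z \<in> closure (edom \<Phi>)"
    unfolding closure_sequential using assms(1,2) U_subset_edom by blast
  ultimately have "z \<in> frontier (edom \<Phi>)"
    unfolding frontier_def by simp
  then have "filterlim (\<lambda>n. norm (G (zs n))) at_top sequentially"
    using essentially_smooth_Phi assms(1,2) unfolding essentially_smooth_def by blast
  then obtain n where "B + 1 \<le> norm (G (zs n))"
    unfolding filterlim_at_top using eventually_happens'[OF sequentially_bot] by blast
  then show False
    using assms(3)[of n] by simp
qed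

lemma subgradient_point_in_U:
  assumes x: "x \<in> edom \<Phi>" and sg: "\<And>u. u \<in> edom \<Phi> \<Longrightarrow> f x + y \<bullet> (u - x) \<le> f u"
  shows "x \<in> U"
proof -
  obtain x1 where x1: "x1 \<in> U"
    using U_nonempty by blast
  obtain r M where "0 < r" and bound: "\<And>z. z \<in> U \<Longrightarrow> f x1 - M + r * norm (G z) \<le> D x1 z"
    using D_bounds_norm_G[OF x1] by blast
  define v where "v = x1 - x"
  define t where "t n = inverse (real (Suc n))" for n
  define xs where "xs n = x + t n *\<^sub>R v" for n
  have t: "0 < t n" "t n \<le> 1" for n
    by (auto simp: t_def field_simps)
  have xs: "xs n \<in> U" for n
    using mem_interior_closure_convex_shrink[OF convex_edom x1 closure_subset[THEN subsetD, OF x] t]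
    by (simp add: xs_def v_def algebra_simps)
  have "xs \<longlonglongrightarrow> x + 0 *\<^sub>R v"
    unfolding xs_def t_def by (intro tendsto_intros LIMSEQ_inverse_real_of_nat)
  then have "xs \<longlonglongrightarrow> x"
    by simp
  moreover have "norm (G (xs n)) \<le> (M - f x - y \<bullet> v) / r" for n
  proof -
    have grad: "f (xs n) + G (xs n) \<bullet> (x - xs n) \<le> f x"
      using gradient_inequality[OF xs x] .
    have sub: "f x + t n * (y \<bullet> v) \<le> f (xs n)"
      using sg[of "xs n"] xs U_subset_edom by (auto simp: xs_def)
    have "t n * (y \<bullet> v) \<le> t n * (G (xs n) \<bullet> v)"
      using grad sub by (simp add: xs_def)
    then have "y \<bullet> v \<le> G (xs n) \<bullet> v"
      using t[of n] by simp
    then have "D x1 (xs n) \<le> f x1 - f x - y \<bullet> v"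
      using sub t[of n] mult_left_mono[of "y \<bullet> v" "G (xs n) \<bullet> v" "1 - t n"]
      unfolding D_def by (simp add: xs_def v_def algebra_simps)
    then have "r * norm (G (xs n)) \<le> M - f x - y \<bullet> v"
      using bound[OF xs[of n]] by linarith
    then show ?thesis
      using \<open>0 < r\<close> by (simp add: pos_le_divide_eq mult.commute)
  qed
  ultimately show ?thesis
    by (rule limit_in_U_if_G_bounded[OF xs])
qed

lemma subgradient_eq_G:
  assumes x: "x \<in> U" and sg: "\<And>u. u \<in> edom \<Phi> \<Longrightarrow> f x + y \<bullet> (u - x) \<le> f u"
  shows "G x = y"
proof -
  have "((\<lambda>u. f u - y \<bullet> u) has_derivative (\<lambda>h. G x \<bullet> h - y \<bullet> h)) (at x)"
    using has_derivative_f[OF x] by (auto intro!: derivative_eq_intros)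
  moreover have "eventually (\<lambda>u. u \<in> U) (at x)"
    using eventually_at_in_open'[OF open_interior x] .
  then have "eventually (\<lambda>u. f x - y \<bullet> x \<le> f u - y \<bullet> u) (at x)"
    by eventually_elim (use sg U_subset_edom in \<open>force simp: inner_diff_right\<close>)
  ultimately have "(\<lambda>h. G x \<bullet> h - y \<bullet> h) = (\<lambda>h. 0)"
    by (rule has_derivative_local_min)
  then have "(G x - y) \<bullet> (G x - y) = 0"
    by (metis inner_diff_left)
  then show ?thesis by simp
qed

section \<open>The gradient of the convex conjugate\<close>

abbreviation "\<Psi> \<equiv> conj_fun \<Phi>"
abbreviation "cf \<equiv> rfun \<Psi>"
abbreviation "V \<equiv> interior (edom \<Psi>)"

lemma pairing_minus_Phi_le_conj: "ereal (x \<bullet> y) - \<Phi> x \<le> \<Psi> y"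
  unfolding conj_fun_def by (rule SUP_upper) simp

lemma conj_eq_rfun:
  assumes "y \<in> edom \<Psi>"
  shows "\<Psi> y = ereal (cf y)"
proof -
  obtain x where "x \<in> edom \<Phi>"
    using edom_nonempty by blast
  then have "ereal (x \<bullet> y - f x) \<le> \<Psi> y"
    using pairing_minus_Phi_le_conj[of x y] Phi_eq_rfun by simp
  then have "\<Psi> y \<noteq> -\<infinity>"
    by auto
  moreover have "\<Psi> y \<noteq> \<infinity>"
    using assms unfolding edom_def by auto
  ultimately show ?thesis
    unfolding rfun_def by (cases "\<Psi> y") auto
qed

lemma fenchel_young:
  assumes "x \<in> edom \<Phi>" "y \<in> edom \<Psi>"
  shows "x \<bullet> y - f x \<le> cf y"
  using pairing_minus_Phi_le_conj[of x y] Phi_eq_rfun[OF assms(1)] conj_eq_rfun[OF assms(2)] by simp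

lemma conj_convex_combination:
  assumes y1: "y1 \<in> edom \<Psi>" and y2: "y2 \<in> edom \<Psi>" and t: "0 \<le> t" "t \<le> 1"
  shows "t *\<^sub>R y1 + (1 - t) *\<^sub>R y2 \<in> edom \<Psi>"
    and "cf (t *\<^sub>R y1 + (1 - t) *\<^sub>R y2) \<le> t * cf y1 + (1 - t) * cf y2"
proof -
  let ?y = "t *\<^sub>R y1 + (1 - t) *\<^sub>R y2"
  have "ereal (x \<bullet> ?y) - \<Phi> x \<le> ereal (t * cf y1 + (1 - t) * cf y2)" for x
  proof (cases "x \<in> edom \<Phi>")
    case True
    have "x \<bullet> ?y - f x = t * (x \<bullet> y1 - f x) + (1 - t) * (x \<bullet> y2 - f x)"
      by (simp add: inner_add_right algebra_simps)
    also have "\<dots> \<le> t * cf y1 + (1 - t) * cf y2"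
      using fenchel_young[OF True y1] fenchel_young[OF True y2] t
      by (intro add_mono mult_left_mono) auto
    finally show ?thesis
      using Phi_eq_rfun[OF True] by simp
  qed (simp add: edom_def)
  then have le: "\<Psi> ?y \<le> ereal (t * cf y1 + (1 - t) * cf y2)"
    unfolding conj_fun_def by (rule SUP_least)
  then show "?y \<in> edom \<Psi>"
    unfolding edom_def using le_less_trans by fastforce
  then show "cf ?y \<le> t * cf y1 + (1 - t) * cf y2"
    using le conj_eq_rfun by simp
qed

lemma convex_edom_conj: "convex (edom \<Psi>)"
  unfolding convex_alt using conj_convex_combination(1) by (metis add.commute)

lemma continuous_on_conj: "continuous_on V cf"
proof -
  have "convex_on (edom \<Psi>) cf"
  proof (rule convex_onI[OF _ convex_edom_conj])
    fix t :: real and x y assume "0 < t" "t < 1" "x \<in> edom \<Psi>" "y \<in> edom \<Psi>"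
    then show "cf ((1 - t) *\<^sub>R x + t *\<^sub>R y) \<le> (1 - t) * cf x + t * cf y"
      using conj_convex_combination(2)[of y x t] by (simp add: add.commute)
  qed
  then show ?thesis
    by (rule convex_on_continuous[OF open_interior convex_on_subset[OF _ interior_subset]])
      (rule convex_interior[OF convex_edom_conj])
qed

lemma conj_maximizer_in_U:
  assumes y: "y \<in> edom \<Psi>" and x: "x \<in> edom \<Phi>" and max: "cf y = x \<bullet> y - f x"
  shows "x \<in> U" and "G x = y"
proof -
  have sg: "f x + y \<bullet> (u - x) \<le> f u" if "u \<in> edom \<Phi>" for u
    using fenchel_young[OF that y] max by (simp add: inner_diff_right inner_commute)
  show "x \<in> U"
    by (rule subgradient_point_in_U[OF x sg])
  then show "G x = y"
    using subgradient_eq_G sg by blast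
qed

lemma conj_maximizer_unique:
  assumes y: "y \<in> edom \<Psi>" and "x \<in> edom \<Phi>" "cf y = x \<bullet> y - f x"
    and "x' \<in> edom \<Phi>" "cf y = x' \<bullet> y - f x'"
  shows "x' = x"
proof -
  have x: "x \<in> U" "G x = y"
    using conj_maximizer_in_U[OF y assms(2,3)] by auto
  then have "D x' x = 0"
    using assms(3,5) unfolding D_def by (simp add: inner_diff_right inner_commute)
  then show ?thesis
    using D_le_zero_imp_eq[OF x(1) assms(4)] by simp
qed

lemma conj_near_maximizers_bounded:
  assumes "0 < r" and ball: "cball y0 r \<subseteq> V"
  obtains B where "\<And>x y. y \<in> cball y0 (r / 2) \<Longrightarrow> x \<in> edom \<Phi> \<Longrightarrow> cf y \<le> x \<bullet> y - f x + 1
    \<Longrightarrow> norm x \<le> B"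
proof -
  have ball_edom: "cball y0 r \<subseteq> edom \<Psi>"
    using ball interior_subset by blast
  have cont: "continuous_on (cball y0 r) cf"
    using continuous_on_subset[OF continuous_on_conj ball] .
  have "cball y0 r \<noteq> {}"
    using \<open>0 < r\<close> by simp
  then obtain yM ym where yM: "\<And>y. y \<in> cball y0 r \<Longrightarrow> cf y \<le> cf yM"
    and ym: "\<And>y. y \<in> cball y0 r \<Longrightarrow> cf ym \<le> cf y"
    using continuous_attains_sup[OF compact_cball _ cont] continuous_attains_inf[OF compact_cball _ cont]
    by blast
  \<comment> \<open>Fenchel--Young at the point of the big ball in direction \<open>x\<close> bounds \<open>r / 2 * norm x\<close>\<close>
  have "norm x \<le> 2 * (cf yM - cf ym + 1) / r"
    if y: "y \<in> cball y0 (r / 2)" and x: "x \<in> edom \<Phi>" and near: "cf y \<le> x \<bullet> y - f x + 1" for x y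
  proof -
    define y' where "y' = y + (r / 2 / norm x) *\<^sub>R x"
    have "norm (y' - y) \<le> r / 2"
      using \<open>0 < r\<close> by (cases "x = 0") (simp_all add: y'_def)
    then have "y' \<in> cball y0 (r / 2 + r / 2)"
      using cball_trans[OF y, of y' "r / 2"] by (simp add: dist_norm norm_minus_commute)
    then have "y' \<in> cball y0 r"
      by simp
    then have "x \<bullet> y' - f x \<le> cf yM"
      using fenchel_young[OF x, of y'] ball_edom yM[of y'] by auto
    moreover have "x \<bullet> y' = x \<bullet> y + r / 2 * norm x"
      by (cases "x = 0")
        (simp_all add: y'_def inner_add_right power2_norm_eq_inner[symmetric] power2_eq_square)
    moreover have "cf ym \<le> cf y"
      using ym y \<open>0 < r\<close> by simp
    ultimately have "r / 2 * norm x \<le> cf yM - cf ym + 1"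
      using near by linarith
    then show ?thesis
      using \<open>0 < r\<close> by (simp add: field_simps)
  qed
  then show ?thesis
    using that by blast
qed

lemma conj_approx_maximizers_limit:
  assumes y: "y \<in> V" and "xs \<longlonglongrightarrow> l" "ys \<longlonglongrightarrow> y" "es \<longlonglongrightarrow> 0" and xs: "\<And>n. xs n \<in> edom \<Phi>"
    and approx: "\<And>n. cf (ys n) \<le> xs n \<bullet> ys n - f (xs n) + es n"
  shows "l \<in> edom \<Phi>" and "cf y = l \<bullet> y - f l"
proof -
  have "isCont cf y"
    using continuous_on_conj y continuous_on_eq_continuous_at open_interior by blast
  then have lim: "(\<lambda>n. xs n \<bullet> ys n - cf (ys n) + es n) \<longlonglongrightarrow> l \<bullet> y - cf y + 0"
    using isCont_tendsto_compose assms(2-4) by (intro tendsto_intros) auto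
  have bound: "\<Phi> (xs n) \<le> ereal (xs n \<bullet> ys n - cf (ys n) + es n)" for n
    using approx[of n] Phi_eq_rfun[OF xs] by simp
  have le: "\<Phi> l \<le> ereal (l \<bullet> y - cf y + 0)"
    by (rule Phi_le_limit[OF \<open>xs \<longlonglongrightarrow> l\<close> bound lim])
  then show l: "l \<in> edom \<Phi>"
    by (rule edom_if_le_ereal)
  have "l \<bullet> y - f l \<le> cf y"
    using fenchel_young[OF l] y interior_subset by blast
  then show "cf y = l \<bullet> y - f l"
    using le Phi_eq_rfun[OF l] by simp
qed

lemma conj_maximizer_exists:
  assumes y: "y \<in> V"
  obtains x where "x \<in> edom \<Phi>" "cf y = x \<bullet> y - f x"
proof -
  obtain r where r: "0 < r" "cball y r \<subseteq> V"
    using open_interior y open_contains_cball by blast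
  then obtain B where B: "\<And>x y'. y' \<in> cball y (r / 2) \<Longrightarrow> x \<in> edom \<Phi>
      \<Longrightarrow> cf y' \<le> x \<bullet> y' - f x + 1 \<Longrightarrow> norm x \<le> B"
    using conj_near_maximizers_bounded by blast
  have "\<Psi> y = ereal (cf y)"
    using conj_eq_rfun y interior_subset by blast
  then have "ereal (cf y - inverse (real (Suc n))) < \<Psi> y" for n
    by simp
  then have "\<forall>n. \<exists>x. ereal (cf y - inverse (real (Suc n))) < ereal (x \<bullet> y) - \<Phi> x"
    unfolding conj_fun_def less_SUP_iff by blast
  from choice[OF this] obtain xs
    where xs: "\<And>n. ereal (cf y - inverse (real (Suc n))) < ereal (xs n \<bullet> y) - \<Phi> (xs n)"
    by blast
  have xs_edom: "xs n \<in> edom \<Phi>" for n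
    using xs[of n] unfolding edom_def by (cases "\<Phi> (xs n)") auto
  have approx: "cf y \<le> xs n \<bullet> y - f (xs n) + inverse (real (Suc n))" for n
    using xs[of n] Phi_eq_rfun[OF xs_edom] by simp
  have "norm (xs n) \<le> B" for n
  proof (rule B[OF _ xs_edom])
    show "y \<in> cball y (r / 2)"
      using r(1) by simp
    have "inverse (real (Suc n)) \<le> 1"
      by (simp add: field_simps)
    then show "cf y \<le> xs n \<bullet> y - f (xs n) + 1"
      using approx[of n] by linarith
  qed
  then have "bounded (range xs)"
    by (auto intro: boundedI)
  then obtain l \<phi> where \<phi>: "strict_mono \<phi>" "(xs \<circ> \<phi>) \<longlonglongrightarrow> l"
    using bounded_imp_convergent_subsequence by blast
  have "(\<lambda>n. inverse (real (Suc (\<phi> n)))) \<longlonglongrightarrow> 0"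
    using LIMSEQ_subseq_LIMSEQ[OF LIMSEQ_inverse_real_of_nat \<phi>(1)] by (simp add: o_def)
  then have "l \<in> edom \<Phi>" "cf y = l \<bullet> y - f l"
    using conj_approx_maximizers_limit[OF y \<phi>(2) tendsto_const] xs_edom approx by auto
  then show ?thesis
    using that by blast
qed

lemma conj_maximizers_subseq_tendsto:
  assumes y0: "y0 \<in> V" and xh: "xh \<in> edom \<Phi>" "cf y0 = xh \<bullet> y0 - f xh"
    and r: "0 < r" "cball y0 r \<subseteq> V" and ys: "ys \<longlonglongrightarrow> y0" "\<And>n. ys n \<in> cball y0 (r / 2)"
    and xs: "\<And>n. xs n \<in> edom \<Phi>" "\<And>n. cf (ys n) = xs n \<bullet> ys n - f (xs n)"
  obtains \<phi> where "strict_mono \<phi>" "(xs \<circ> \<phi>) \<longlonglongrightarrow> xh"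
proof -
  obtain B where B: "\<And>x y. y \<in> cball y0 (r / 2) \<Longrightarrow> x \<in> edom \<Phi>
      \<Longrightarrow> cf y \<le> x \<bullet> y - f x + 1 \<Longrightarrow> norm x \<le> B"
    using conj_near_maximizers_bounded[OF r] by blast
  have "norm (xs n) \<le> B" for n
    by (rule B[OF ys(2)[of n] xs(1)[of n]]) (simp add: xs(2))
  then have "bounded (range xs)"
    by (auto intro: boundedI)
  then obtain l \<phi> where \<phi>: "strict_mono \<phi>" "(xs \<circ> \<phi>) \<longlonglongrightarrow> l"
    using bounded_imp_convergent_subsequence by blast
  have "(ys \<circ> \<phi>) \<longlonglongrightarrow> y0"
    using LIMSEQ_subseq_LIMSEQ[OF ys(1) \<phi>(1)] .
  then have "l \<in> edom \<Phi>" "cf y0 = l \<bullet> y0 - f l"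
    using conj_approx_maximizers_limit[OF y0 \<phi>(2) _ tendsto_const, of "ys \<circ> \<phi>"] xs by simp_all
  moreover have "y0 \<in> edom \<Psi>"
    using y0 interior_subset by blast
  ultimately have "l = xh"
    using conj_maximizer_unique[OF _ xh] by blast
  then show ?thesis
    using that[OF \<phi>(1)] \<phi>(2) by simp
qed

lemma conj_maximizer_close:
  assumes y0: "y0 \<in> V" and xh: "xh \<in> edom \<Phi>" "cf y0 = xh \<bullet> y0 - f xh" and "0 < \<epsilon>"
  obtains d where "0 < d"
    "\<And>y x. norm (y - y0) < d \<Longrightarrow> x \<in> edom \<Phi> \<Longrightarrow> cf y = x \<bullet> y - f x \<Longrightarrow> norm (x - xh) \<le> \<epsilon>"
proof -
  obtain r where r: "0 < r" "cball y0 r \<subseteq> V"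
    using open_interior y0 open_contains_cball by blast
  have "\<exists>d>0. \<forall>y x. norm (y - y0) < d \<longrightarrow> x \<in> edom \<Phi> \<longrightarrow> cf y = x \<bullet> y - f x
      \<longrightarrow> norm (x - xh) \<le> \<epsilon>" (is "\<exists>d>0. ?close d")
  proof (rule ccontr)
    assume neg: "\<not> (\<exists>d>0. ?close d)"
    have "\<exists>y x. norm (y - y0) < min (r / 2) (1 / real (Suc n)) \<and> x \<in> edom \<Phi>
        \<and> cf y = x \<bullet> y - f x \<and> \<not> norm (x - xh) \<le> \<epsilon>" for n
    proof -
      have "0 < min (r / 2) (1 / real (Suc n))"
        using r(1) by simp
      then show ?thesis
        using neg by blast
    qed
    then have "\<forall>n. \<exists>y x. norm (y - y0) < min (r / 2) (1 / real (Suc n)) \<and> x \<in> edom \<Phi>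
        \<and> cf y = x \<bullet> y - f x \<and> \<not> norm (x - xh) \<le> \<epsilon>"
      by blast
    from choice[OF this] obtain ys
      where "\<forall>n. \<exists>x. norm (ys n - y0) < min (r / 2) (1 / real (Suc n)) \<and> x \<in> edom \<Phi>
        \<and> cf (ys n) = x \<bullet> ys n - f x \<and> \<not> norm (x - xh) \<le> \<epsilon>"
      by blast
    from choice[OF this] obtain xs where seq: "\<And>n. norm (ys n - y0) < min (r / 2) (1 / real (Suc n))"
      "\<And>n. xs n \<in> edom \<Phi>" "\<And>n. cf (ys n) = xs n \<bullet> ys n - f (xs n)" "\<And>n. \<not> norm (xs n - xh) \<le> \<epsilon>"
      by blast
    have "(\<lambda>n. ys n - y0) \<longlonglongrightarrow> 0"
      using seq(1) by (intro LIMSEQ_norm_0) simp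
    then have ys: "ys \<longlonglongrightarrow> y0"
      by (rule LIM_zero_cancel)
    have ys_ball: "ys n \<in> cball y0 (r / 2)" for n
      using seq(1)[of n] by (simp add: dist_norm norm_minus_commute)
    obtain \<phi> where "(xs \<circ> \<phi>) \<longlonglongrightarrow> xh"
      using conj_maximizers_subseq_tendsto[OF y0 xh r ys ys_ball seq(2,3)] by blast
    then have "eventually (\<lambda>n. dist ((xs \<circ> \<phi>) n) xh < \<epsilon>) sequentially"
      using \<open>0 < \<epsilon>\<close> tendstoD by blast
    then obtain n where "dist ((xs \<circ> \<phi>) n) xh < \<epsilon>"
      unfolding eventually_sequentially by blast
    then show False
      using seq(4)[of "\<phi> n"] by (simp add: dist_norm)
  qed
  then show ?thesis
    using that by blast
qed

lemma has_derivative_conj: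
  assumes y0: "y0 \<in> V" and xh: "xh \<in> edom \<Phi>" "cf y0 = xh \<bullet> y0 - f xh"
  shows "(cf has_derivative (\<lambda>h. xh \<bullet> h)) (at y0)"
  unfolding has_derivative_at_alt
proof (intro conjI allI impI)
  show "bounded_linear ((\<bullet>) xh)"
    by (rule bounded_linear_inner_right)
  fix e :: real assume "0 < e"
  obtain d where "0 < d" and d: "\<And>y x. norm (y - y0) < d \<Longrightarrow> x \<in> edom \<Phi> \<Longrightarrow> cf y = x \<bullet> y - f x
      \<Longrightarrow> norm (x - xh) \<le> e"
    using conj_maximizer_close[OF y0 xh \<open>0 < e\<close>] by blast
  obtain r where "0 < r" "ball y0 r \<subseteq> V"
    using open_interior y0 open_contains_ball by blast
  show "\<exists>d>0. \<forall>y. norm (y - y0) < d \<longrightarrow> norm (cf y - cf y0 - xh \<bullet> (y - y0)) \<le> e * norm (y - y0)"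
  proof (intro exI[of _ "min d r"] conjI allI impI)
    show "0 < min d r"
      using \<open>0 < d\<close> \<open>0 < r\<close> by simp
    fix y assume y: "norm (y - y0) < min d r"
    then have "y \<in> V"
      using \<open>ball y0 r \<subseteq> V\<close> by (auto simp: dist_norm norm_minus_commute)
    then obtain x where x: "x \<in> edom \<Phi>" "cf y = x \<bullet> y - f x"
      by (rule conj_maximizer_exists)
    have "y \<in> edom \<Psi>" "y0 \<in> edom \<Psi>"
      using \<open>y \<in> V\<close> y0 interior_subset by blast+
    then have "0 \<le> cf y - cf y0 - xh \<bullet> (y - y0)"
      and "cf y - cf y0 - xh \<bullet> (y - y0) \<le> (x - xh) \<bullet> (y - y0)"
      using fenchel_young[OF xh(1), of y] fenchel_young[OF x(1), of y0] xh(2) x(2)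
      by (simp_all add: inner_diff_right inner_diff_left)
    moreover have "(x - xh) \<bullet> (y - y0) \<le> e * norm (y - y0)"
      using norm_cauchy_schwarz[of "x - xh" "y - y0"] d[OF _ x] y
        mult_right_mono[of "norm (x - xh)" e "norm (y - y0)"] by simp
    ultimately show "norm (cf y - cf y0 - xh \<bullet> (y - y0)) \<le> e * norm (y - y0)"
      by (metis abs_of_nonneg order_trans real_norm_def)
  qed
qed

lemma G_egrad_conj:
  assumes y: "y \<in> V"
  shows "G (egrad \<Psi> y) = y"
proof -
  obtain x where x: "x \<in> edom \<Phi>" "cf y = x \<bullet> y - f x"
    using conj_maximizer_exists[OF y] by blast
  have deriv: "(cf has_derivative (\<lambda>h. x \<bullet> h)) (at y)"
    using has_derivative_conj[OF y x] .
  then have "(cf has_derivative (\<lambda>h. egrad \<Psi> y \<bullet> h)) (at y)"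
    unfolding egrad_def grad_def by (rule someI)
  from has_derivative_unique[OF this deriv] have "(\<lambda>h. egrad \<Psi> y \<bullet> h) = (\<bullet>) x" .
  from fun_cong[OF this, of "egrad \<Psi> y - x"]
  have "(egrad \<Psi> y - x) \<bullet> (egrad \<Psi> y - x) = 0"
    by (simp add: inner_diff_left)
  then have "egrad \<Psi> y = x"
    by simp
  then show ?thesis
    using conj_maximizer_in_U(2)[OF _ x] y interior_subset by blast
qed

end

section \<open>Convergence of the inexact Bregman proximal point algorithm\<close>

locale inexact_bppa_run = legendre_kernel \<Phi> for \<Phi> :: "'a::euclidean_space \<Rightarrow> ereal" +
  fixes T :: "'a \<Rightarrow> 'a set" and \<sigma>s \<rho>s :: "nat \<Rightarrow> real" and \<sigma> \<rho> :: real and z p w :: "nat \<Rightarrow> 'a"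
  assumes maximal_monotone_T: "maximal_monotone T"
    and \<sigma>_pos: "0 < \<sigma>" and \<sigma>s_ge: "\<And>k. \<sigma> \<le> \<sigma>s k"
    and \<rho>s_nonneg: "\<And>k. 0 \<le> \<rho>s k" and \<rho>s_le: "\<And>k. \<rho>s k \<le> \<rho>" and \<rho>_less_1: "\<rho> < 1"
    and iterates: "inexact_bppa \<Phi> T \<sigma>s \<rho>s z p w"
    and zer_meets_edom: "zer T \<inter> edom \<Phi> \<noteq> {}"
begin

lemma z_in_U: "z k \<in> U"
  using iterates unfolding inexact_bppa_def by (cases k) blast+

lemma p_in_edom: "p k \<in> edom \<Phi>"
  and w_in_T: "w k \<in> T (p k)"
  using iterates unfolding inexact_bppa_def by auto

lemma \<sigma>s_pos: "0 < \<sigma>s k"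
  using \<sigma>_pos \<sigma>s_ge[of k] by linarith

lemma G_step: "G (z (Suc k)) = G (z k) - \<sigma>s k *\<^sub>R w k"
  using iterates G_egrad_conj unfolding inexact_bppa_def by metis

lemma w_eq: "w k = (1 / \<sigma>s k) *\<^sub>R (G (z k) - G (z (Suc k)))"
  using G_step[of k] \<sigma>s_pos[of k] by simp

lemma norm_w_le: "norm (w k) \<le> norm (G (z k) - G (z (Suc k))) / \<sigma>"
  using w_eq[of k] \<sigma>s_pos[of k] \<sigma>s_ge[of k] \<sigma>_pos by (simp add: frac_le)

lemma residual_contraction: "D (p k) (z (Suc k)) \<le> \<rho>s k * D (p k) (z k)"
  using iterates bregman_eq_D[OF p_in_edom z_in_U] unfolding inexact_bppa_def
  by (metis ereal_less_eq(3) times_ereal.simps(1))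

lemma fejer_step:
  assumes "x \<in> zer T" "x \<in> edom \<Phi>"
  shows "D x (z (Suc k)) \<le> D x (z k) - (1 - \<rho>) * D (p k) (z k)"
proof -
  have "0 \<le> (x - p k) \<bullet> (0 - w k)"
    using maximal_monotone_T w_in_T assms(1) unfolding maximal_monotone_def monotone_op_def zer_def
    by blast
  \<comment> \<open>the three-point identity for \<open>D\<close> reduces the step to monotonicity of \<open>T\<close>\<close>
  moreover have "D x (z (Suc k)) - D x (z k) - (D (p k) (z (Suc k)) - D (p k) (z k))
      = \<sigma>s k * (w k \<bullet> (x - p k))"
    using D_three_point[of x "z (Suc k)" "p k"] D_three_point[of x "z k" "p k"] G_step[of k]
    by (simp add: inner_diff_left algebra_simps)
  moreover have "\<sigma>s k * (w k \<bullet> (x - p k)) \<le> 0"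
    using calculation(1) \<sigma>s_pos[of k] by (simp add: mult_nonneg_nonpos inner_commute)
  ultimately have "D x (z (Suc k)) \<le> D x (z k) + D (p k) (z (Suc k)) - D (p k) (z k)"
    by linarith
  also have "\<dots> \<le> D x (z k) - (1 - \<rho>s k) * D (p k) (z k)"
    using residual_contraction[of k] by (simp add: algebra_simps)
  also have "\<dots> \<le> D x (z k) - (1 - \<rho>) * D (p k) (z k)"
    using \<rho>s_le[of k] D_nonneg[OF p_in_edom z_in_U] by (simp add: mult_right_mono)
  finally show ?thesis .
qed

lemma fejer_monotone:
  assumes "x \<in> zer T" "x \<in> edom \<Phi>"
  shows "decseq (\<lambda>k. D x (z k))"
proof (rule decseq_SucI)
  fix k
  show "D x (z (Suc k)) \<le> D x (z k)"
    using fejer_step[OF assms, of k] \<rho>_less_1 D_nonneg[OF p_in_edom z_in_U]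
    by (smt (verit) mult_nonneg_nonneg)
qed

lemma residuals_tendsto_zero:
  shows "(\<lambda>k. D (p k) (z k)) \<longlonglongrightarrow> 0" and "(\<lambda>k. D (p k) (z (Suc k))) \<longlonglongrightarrow> 0"
proof -
  obtain x where x: "x \<in> zer T" "x \<in> edom \<Phi>"
    using zer_meets_edom by blast
  have partial_sums: "(1 - \<rho>) * (\<Sum>k<n. D (p k) (z k)) \<le> D x (z 0) - D x (z n)" for n
  proof (induction n)
    case (Suc n)
    then show ?case
      using fejer_step[OF x, of n] by (simp add: algebra_simps)
  qed simp
  have "(\<Sum>k<n. D (p k) (z k)) \<le> D x (z 0) / (1 - \<rho>)" for n
  proof -
    have "(1 - \<rho>) * (\<Sum>k<n. D (p k) (z k)) \<le> D x (z 0)"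
      using partial_sums[of n] D_nonneg[OF x(2) z_in_U, of n] by linarith
    then show ?thesis
      using \<rho>_less_1 by (simp add: field_simps)
  qed
  then have "summable (\<lambda>k. D (p k) (z k))"
    using D_nonneg[OF p_in_edom z_in_U] by (intro summableI_nonneg_bounded) auto
  then show e: "(\<lambda>k. D (p k) (z k)) \<longlonglongrightarrow> 0"
    by (rule summable_LIMSEQ_zero)
  show "(\<lambda>k. D (p k) (z (Suc k))) \<longlonglongrightarrow> 0"
  proof (rule tendsto_sandwich[of "\<lambda>_. 0" _ _ "\<lambda>k. \<rho> * D (p k) (z k)"])
    show "\<forall>\<^sub>F k in sequentially. 0 \<le> D (p k) (z (Suc k))"
      using D_nonneg[OF p_in_edom z_in_U] by simp
    show "\<forall>\<^sub>F k in sequentially. D (p k) (z (Suc k)) \<le> \<rho> * D (p k) (z k)"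
      using residual_contraction \<rho>s_le D_nonneg[OF p_in_edom z_in_U]
      by (intro always_eventually allI) (meson mult_right_mono order_trans)
    show "(\<lambda>k. \<rho> * D (p k) (z k)) \<longlonglongrightarrow> 0"
      using tendsto_mult_right_zero[OF e] by simp
  qed simp
qed

lemma w_tendsto_zero:
  assumes z\<phi>: "(\<lambda>n. z (\<phi> n)) \<longlonglongrightarrow> zb" and z1\<phi>: "(\<lambda>n. z (Suc (\<phi> n))) \<longlonglongrightarrow> zb" and zb: "zb \<in> U"
  shows "(\<lambda>n. w (\<phi> n)) \<longlonglongrightarrow> 0"
proof -
  have "isCont G zb"
    using continuous_on_G zb continuous_on_eq_continuous_at open_interior by blast
  then have "(\<lambda>n. norm (G (z (\<phi> n)) - G (z (Suc (\<phi> n)))) / \<sigma>) \<longlonglongrightarrow> norm (G zb - G zb) / \<sigma>"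
    using isCont_tendsto_compose z\<phi> z1\<phi> \<sigma>_pos by (intro tendsto_intros) auto
  then have G_diff: "(\<lambda>n. norm (G (z (\<phi> n)) - G (z (Suc (\<phi> n)))) / \<sigma>) \<longlonglongrightarrow> 0"
    by simp
  have "(\<lambda>n. norm (w (\<phi> n))) \<longlonglongrightarrow> 0"
  proof (rule tendsto_sandwich[OF _ _ tendsto_const G_diff])
    show "eventually (\<lambda>n. 0 \<le> norm (w (\<phi> n))) sequentially"
      by simp
    show "eventually (\<lambda>n. norm (w (\<phi> n)) \<le> norm (G (z (\<phi> n)) - G (z (Suc (\<phi> n)))) / \<sigma>) sequentially"
      using norm_w_le by simp
  qed
  then show ?thesis
    by (simp only: tendsto_norm_zero_iff)
qed

lemma companions_converge:
  assumes \<phi>: "strict_mono \<phi>" and z\<phi>: "(\<lambda>n. z (\<phi> n)) \<longlonglongrightarrow> zb" and zb: "zb \<in> U"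
  shows "(\<lambda>n. p (\<phi> n)) \<longlonglongrightarrow> zb" and "(\<lambda>n. z (Suc (\<phi> n))) \<longlonglongrightarrow> zb"
    and "(\<lambda>n. w (\<phi> n)) \<longlonglongrightarrow> 0"
proof -
  obtain e where e: "0 < e" "cball zb e \<subseteq> U"
    using open_interior zb open_contains_cball by blast
  then obtain \<theta> where "0 < \<theta>"
    and quad: "\<And>a b. a \<in> cball zb e \<Longrightarrow> b \<in> cball zb e \<Longrightarrow> \<theta> / 2 * (norm (a - b))\<^sup>2 \<le> D a b"
    using local_quadratic_bounds by metis
  have "0 < e / 2"
    using e(1) by simp
  have "(\<lambda>n. norm (p (\<phi> n) - z (\<phi> n))) \<longlonglongrightarrow> 0"
  proof (rule tendsto_zero_from_truncated_quadratic_bound[OF \<open>0 < \<theta>\<close> \<open>0 < e / 2\<close> norm_ge_zero])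
    show "(\<lambda>n. D (p (\<phi> n)) (z (\<phi> n))) \<longlonglongrightarrow> 0"
      using LIMSEQ_subseq_LIMSEQ[OF residuals_tendsto_zero(1) \<phi>] by (simp add: o_def)
    show "eventually (\<lambda>n. \<theta> / 2 * (min (norm (p (\<phi> n) - z (\<phi> n))) (e / 2))\<^sup>2
        \<le> D (p (\<phi> n)) (z (\<phi> n))) sequentially"
      using eventually_in_cball[OF z\<phi> \<open>0 < e / 2\<close>]
      by eventually_elim (rule truncated_quadratic_le_D_left, use e quad p_in_edom in auto)
  qed
  then show p\<phi>: "(\<lambda>n. p (\<phi> n)) \<longlonglongrightarrow> zb"
    by (rule tendsto_if_norm_diff_tendsto_zero[OF z\<phi>])
  have "(\<lambda>n. norm (p (\<phi> n) - z (Suc (\<phi> n)))) \<longlonglongrightarrow> 0"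
  proof (rule tendsto_zero_from_truncated_quadratic_bound[OF \<open>0 < \<theta>\<close> \<open>0 < e / 2\<close> norm_ge_zero])
    show "(\<lambda>n. D (p (\<phi> n)) (z (Suc (\<phi> n)))) \<longlonglongrightarrow> 0"
      using LIMSEQ_subseq_LIMSEQ[OF residuals_tendsto_zero(2) \<phi>] by (simp add: o_def)
    show "eventually (\<lambda>n. \<theta> / 2 * (min (norm (p (\<phi> n) - z (Suc (\<phi> n)))) (e / 2))\<^sup>2
        \<le> D (p (\<phi> n)) (z (Suc (\<phi> n)))) sequentially"
      using eventually_in_cball[OF p\<phi> \<open>0 < e / 2\<close>]
      by eventually_elim (rule truncated_quadratic_le_D_right, use e quad z_in_U in auto)
  qed
  then have "(\<lambda>n. norm (z (Suc (\<phi> n)) - p (\<phi> n))) \<longlonglongrightarrow> 0"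
    by (simp add: norm_minus_commute)
  then show z1\<phi>: "(\<lambda>n. z (Suc (\<phi> n))) \<longlonglongrightarrow> zb"
    by (rule tendsto_if_norm_diff_tendsto_zero[OF p\<phi>])
  show "(\<lambda>n. w (\<phi> n)) \<longlonglongrightarrow> 0"
    by (rule w_tendsto_zero[OF z\<phi> z1\<phi> zb])
qed

lemma cluster_point_in_zer:
  assumes "strict_mono \<phi>" "(\<lambda>n. z (\<phi> n)) \<longlonglongrightarrow> zb" "zb \<in> U"
  shows "zb \<in> zer T"
proof -
  have "0 \<in> T zb"
  proof (rule maximal_monotone_zero_at_limit[OF maximal_monotone_T])
    show "(\<lambda>n. p (\<phi> n)) \<longlonglongrightarrow> zb" "(\<lambda>n. w (\<phi> n)) \<longlonglongrightarrow> 0"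
      using companions_converge[OF assms] by blast+
    show "\<And>n. w (\<phi> n) \<in> T (p (\<phi> n))"
      by (rule w_in_T)
  qed
  then show ?thesis
    unfolding zer_def by simp
qed

lemma converges_to_cluster_point_in_zer:
  assumes \<phi>: "strict_mono \<phi>" and z\<phi>: "(\<lambda>n. z (\<phi> n)) \<longlonglongrightarrow> zb" and zb: "zb \<in> zer T" "zb \<in> U"
  shows "z \<longlonglongrightarrow> zb"
proof -
  obtain e where e: "0 < e" "cball zb e \<subseteq> U"
    using open_interior zb(2) open_contains_cball by blast
  then obtain \<theta> \<Theta> where "0 < \<theta>"
    and lower: "\<And>a b. a \<in> cball zb e \<Longrightarrow> b \<in> cball zb e \<Longrightarrow> \<theta> / 2 * (norm (a - b))\<^sup>2 \<le> D a b"
    and upper: "\<And>a b. a \<in> cball zb e \<Longrightarrow> b \<in> cball zb e \<Longrightarrow> D a b \<le> \<Theta> / 2 * (norm (a - b))\<^sup>2"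
    using local_quadratic_bounds by metis
  have zb_edom: "zb \<in> edom \<Phi>"
    using zb(2) U_subset_edom by blast
  have "(\<lambda>n. D zb (z (\<phi> n))) \<longlonglongrightarrow> 0"
  proof (rule tendsto_sandwich[of "\<lambda>_. 0" _ _ "\<lambda>n. \<Theta> / 2 * (norm (zb - z (\<phi> n)))\<^sup>2"])
    show "eventually (\<lambda>n. 0 \<le> D zb (z (\<phi> n))) sequentially"
      using D_nonneg[OF zb_edom z_in_U] by simp
    show "eventually (\<lambda>n. D zb (z (\<phi> n)) \<le> \<Theta> / 2 * (norm (zb - z (\<phi> n)))\<^sup>2) sequentially"
      using eventually_in_cball[OF z\<phi> e(1)] by eventually_elim (rule upper, use e in auto)
    have "(\<lambda>n. \<Theta> / 2 * (norm (zb - z (\<phi> n)))\<^sup>2) \<longlonglongrightarrow> \<Theta> / 2 * (norm (zb - zb))\<^sup>2"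
      by (intro tendsto_intros z\<phi>)
    then show "(\<lambda>n. \<Theta> / 2 * (norm (zb - z (\<phi> n)))\<^sup>2) \<longlonglongrightarrow> 0"
      by simp
  qed simp
  then have D_lim: "(\<lambda>k. D zb (z k)) \<longlonglongrightarrow> 0"
    using decseq_tendsto_zero_if_subseq[OF fejer_monotone[OF zb(1) zb_edom] _ \<phi>]
      D_nonneg[OF zb_edom z_in_U] by blast
  have "0 < e / 2"
    using e(1) by simp
  have "(\<lambda>k. norm (zb - z k)) \<longlonglongrightarrow> 0"
  proof (rule tendsto_zero_from_truncated_quadratic_bound[OF \<open>0 < \<theta>\<close> \<open>0 < e / 2\<close> norm_ge_zero D_lim])
    show "eventually (\<lambda>k. \<theta> / 2 * (min (norm (zb - z k)) (e / 2))\<^sup>2 \<le> D zb (z k)) sequentially"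
      by (intro always_eventually allI)
        (rule truncated_quadratic_le_D_right, use e lower z_in_U in auto)
  qed
  then show ?thesis
    using tendsto_if_norm_diff_tendsto_zero[OF tendsto_const, of z zb] by (simp add: norm_minus_commute)
qed

lemma iterates_bounded:
  assumes "zstar \<in> zer T" "zstar \<in> edom \<Phi>" and coer: "coercive (\<lambda>y. bregman \<Phi> zstar y)"
  shows "bounded (range z)"
proof -
  obtain R where R: "\<And>y. R \<le> norm y \<Longrightarrow> ereal (D zstar (z 0) + 1) \<le> bregman \<Phi> zstar y"
    using coer unfolding coercive_def by blast
  have "norm (z k) \<le> R" for k
  proof (rule ccontr)
    assume "\<not> norm (z k) \<le> R"
    then have "D zstar (z 0) + 1 \<le> D zstar (z k)"
      using R[of "z k"] bregman_eq_D[OF assms(2) z_in_U] by simp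
    moreover have "D zstar (z k) \<le> D zstar (z 0)"
      using fejer_monotone[OF assms(1,2)] by (simp add: decseq_def)
    ultimately show False
      by simp
  qed
  then show ?thesis
    by (auto intro: boundedI)
qed

lemma G_iterates_bounded:
  assumes "x \<in> zer T" "x \<in> U"
  obtains B where "\<And>k. norm (G (z k)) \<le> B"
proof -
  obtain r M where "0 < r" and bound: "\<And>y. y \<in> U \<Longrightarrow> f x - M + r * norm (G y) \<le> D x y"
    using D_bounds_norm_G[OF assms(2)] by blast
  have dec: "D x (z k) \<le> D x (z 0)" for k
    using fejer_monotone[OF assms(1)] assms(2) U_subset_edom by (auto simp: decseq_def)
  have "r * norm (G (z k)) \<le> D x (z 0) - f x + M" for k
    using bound[OF z_in_U[of k]] dec[of k] by linarith
  then have "norm (G (z k)) \<le> (D x (z 0) - f x + M) / r" for k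
    using \<open>0 < r\<close> by (simp add: pos_le_divide_eq mult.commute)
  then show ?thesis
    using that by blast
qed

lemma iterates_converge:
  assumes "zstar \<in> zer T" "zstar \<in> edom \<Phi>" "coercive (\<lambda>y. bregman \<Phi> zstar y)"
    and "zer T \<inter> U \<noteq> {}"
  obtains zb where "zb \<in> zer T" "zb \<in> U" "z \<longlonglongrightarrow> zb"
proof -
  obtain l \<phi> where \<phi>: "strict_mono \<phi>" "(z \<circ> \<phi>) \<longlonglongrightarrow> l"
    using bounded_imp_convergent_subsequence[OF iterates_bounded[OF assms(1-3)]] by blast
  obtain x where "x \<in> zer T" "x \<in> U"
    using assms(4) by blast
  then obtain B where "\<And>k. norm (G (z k)) \<le> B"
    using G_iterates_bounded by blast
  then have "l \<in> U"
    by (intro limit_in_U_if_G_bounded[OF _ \<phi>(2)]) (simp_all add: z_in_U)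
  moreover have z\<phi>: "(\<lambda>n. z (\<phi> n)) \<longlonglongrightarrow> l"
    using \<phi>(2) by (simp add: o_def)
  ultimately have "l \<in> zer T"
    using cluster_point_in_zer[OF \<phi>(1)] by blast
  show ?thesis
    using that converges_to_cluster_point_in_zer[OF \<phi>(1) z\<phi>] \<open>l \<in> zer T\<close> \<open>l \<in> U\<close>
    by blast
qed

section \<open>The estimate under the error bound\<close>

definition rate_factor :: "real \<Rightarrow> real \<Rightarrow> real \<Rightarrow> nat \<Rightarrow> real" where
  "rate_factor \<kappa> \<theta> \<Theta> k =
     (sqrt (\<rho>s k) * sqrt \<Theta> / sqrt \<theta> + \<kappa> / \<sigma>s k * \<Theta> * (1 + sqrt (\<rho>s k)))\<^sup>2 * (\<Theta> / \<theta>)"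

lemma residual_norms_le:
  assumes "0 < \<theta>" "z k \<in> K" "z (Suc k) \<in> K" "p k \<in> K"
    and lower: "\<And>a b. a \<in> K \<Longrightarrow> b \<in> K \<Longrightarrow> \<theta> / 2 * (norm (a - b))\<^sup>2 \<le> D a b"
  shows "norm (p k - z k) \<le> sqrt (2 * D (p k) (z k) / \<theta>)"
    and "norm (p k - z (Suc k)) \<le> sqrt (\<rho>s k) * sqrt (2 * D (p k) (z k) / \<theta>)"
proof -
  have "\<theta> / 2 * (norm (p k - z k))\<^sup>2 \<le> D (p k) (z k)"
    using lower assms(2,4) by blast
  then have "(norm (p k - z k))\<^sup>2 \<le> 2 * D (p k) (z k) / \<theta>"
    using \<open>0 < \<theta>\<close> by (simp add: field_simps)
  then show "norm (p k - z k) \<le> sqrt (2 * D (p k) (z k) / \<theta>)"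
    by (rule real_le_rsqrt)
  have "\<theta> / 2 * (norm (p k - z (Suc k)))\<^sup>2 \<le> \<rho>s k * D (p k) (z k)"
    using lower[OF assms(4,3)] residual_contraction[of k] by linarith
  then have "(norm (p k - z (Suc k)))\<^sup>2 \<le> \<rho>s k * (2 * D (p k) (z k) / \<theta>)"
    using \<open>0 < \<theta>\<close> by (simp add: field_simps)
  then show "norm (p k - z (Suc k)) \<le> sqrt (\<rho>s k) * sqrt (2 * D (p k) (z k) / \<theta>)"
    by (metis real_le_rsqrt real_sqrt_mult)
qed

lemma norm_w_le_residual:
  assumes "0 < \<theta>" "0 \<le> \<Theta>" and K: "z k \<in> K" "z (Suc k) \<in> K" "p k \<in> K"
    and lip: "\<And>a b. a \<in> K \<Longrightarrow> b \<in> K \<Longrightarrow> norm (G a - G b) \<le> \<Theta> * norm (a - b)"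
    and lower: "\<And>a b. a \<in> K \<Longrightarrow> b \<in> K \<Longrightarrow> \<theta> / 2 * (norm (a - b))\<^sup>2 \<le> D a b"
  shows "norm (w k) \<le> \<Theta> * (1 + sqrt (\<rho>s k)) * sqrt (2 * D (p k) (z k) / \<theta>) / \<sigma>s k"
proof -
  define s where "s = sqrt (2 * D (p k) (z k) / \<theta>)"
  have "norm (z k - z (Suc k)) \<le> s + sqrt (\<rho>s k) * s"
    using norm_triangle_ineq[of "z k - p k" "p k - z (Suc k)"] residual_norms_le[OF assms(1) K lower]
    unfolding s_def by (simp add: norm_minus_commute)
  then have G_diff: "norm (G (z k) - G (z (Suc k))) \<le> \<Theta> * (s + sqrt (\<rho>s k) * s)"
    using lip[OF K(1,2)] \<open>0 \<le> \<Theta>\<close> by (meson mult_left_mono order_trans)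
  have "norm (w k) = norm (G (z k) - G (z (Suc k))) / \<sigma>s k"
    using w_eq[of k] \<sigma>s_pos[of k] by simp
  also have "\<dots> \<le> \<Theta> * (s + sqrt (\<rho>s k) * s) / \<sigma>s k"
    using G_diff \<sigma>s_pos[of k] by (simp add: divide_right_mono)
  finally show ?thesis
    unfolding s_def by (simp add: algebra_simps)
qed

lemma D_next_le_rate_factor:
  assumes "0 < \<theta>" "\<theta> \<le> \<Theta>" "0 \<le> \<kappa>" and K: "z k \<in> K" "z (Suc k) \<in> K" "p k \<in> K" "x \<in> K"
    and lip: "\<And>a b. a \<in> K \<Longrightarrow> b \<in> K \<Longrightarrow> norm (G a - G b) \<le> \<Theta> * norm (a - b)"
    and lower: "\<And>a b. a \<in> K \<Longrightarrow> b \<in> K \<Longrightarrow> \<theta> / 2 * (norm (a - b))\<^sup>2 \<le> D a b"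
    and upper: "\<And>a b. a \<in> K \<Longrightarrow> b \<in> K \<Longrightarrow> D a b \<le> \<Theta> / 2 * (norm (a - b))\<^sup>2"
    and x: "norm (x - p k) \<le> \<kappa> * norm (w k)"
  shows "D x (z (Suc k)) \<le> rate_factor \<kappa> \<theta> \<Theta> k * D (p k) (z k)"
proof -
  define s where "s = sqrt (2 * D (p k) (z k) / \<theta>)"
  define A where "A = sqrt (\<rho>s k) * sqrt \<Theta> / sqrt \<theta> + \<kappa> / \<sigma>s k * \<Theta> * (1 + sqrt (\<rho>s k))"
  have "0 \<le> s" "0 \<le> \<Theta>"
    using assms(1,2) D_nonneg[OF p_in_edom z_in_U, of k] by (simp_all add: s_def)
  have b: "norm (p k - z (Suc k)) \<le> sqrt (\<rho>s k) * s"
    using residual_norms_le(2)[OF assms(1) K(1-3) lower] unfolding s_def .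
  have w: "norm (w k) \<le> \<Theta> * (1 + sqrt (\<rho>s k)) * s / \<sigma>s k"
    using norm_w_le_residual[OF assms(1) \<open>0 \<le> \<Theta>\<close> K(1-3) lip lower] unfolding s_def .
  \<comment> \<open>the factor \<open>sqrt \<Theta> / sqrt \<theta> \<ge> 1\<close> only weakens the estimate, to match the stated constant\<close>
  have "sqrt (\<rho>s k) * s \<le> sqrt (\<rho>s k) * sqrt \<Theta> / sqrt \<theta> * s"
    using assms(1,2) \<rho>s_nonneg[of k] \<open>0 \<le> s\<close>
    by (intro mult_right_mono)
      (auto simp: le_divide_eq intro!: mult_left_mono real_sqrt_le_mono)
  moreover have "norm (x - z (Suc k)) \<le> \<kappa> * norm (w k) + sqrt (\<rho>s k) * s"
    using norm_triangle_ineq[of "x - p k" "p k - z (Suc k)"] x b by simp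
  moreover have "\<kappa> * norm (w k) \<le> \<kappa> / \<sigma>s k * \<Theta> * (1 + sqrt (\<rho>s k)) * s"
    using mult_left_mono[OF w \<open>0 \<le> \<kappa>\<close>] by simp
  ultimately have "norm (x - z (Suc k)) \<le> A * s"
    unfolding A_def by (simp add: algebra_simps)
  then have "(norm (x - z (Suc k)))\<^sup>2 \<le> (A * s)\<^sup>2"
    by (simp add: power_mono)
  then have "D x (z (Suc k)) \<le> \<Theta> / 2 * (A * s)\<^sup>2"
    using upper[OF K(4,2)] mult_left_mono[of _ _ "\<Theta> / 2"] \<open>0 \<le> \<Theta>\<close> by force
  also have "\<dots> = \<Theta> / 2 * A\<^sup>2 * (2 * D (p k) (z k) / \<theta>)"
    using assms(1) D_nonneg[OF p_in_edom z_in_U, of k] by (simp add: s_def power_mult_distrib)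
  also have "\<dots> = rate_factor \<kappa> \<theta> \<Theta> k * D (p k) (z k)"
    unfolding rate_factor_def A_def[symmetric] using assms(1) by (simp add: field_simps)
  finally show ?thesis .
qed

lemma rate_factor_pos:
  assumes "0 < \<theta>" "\<theta> \<le> \<Theta>" "0 < \<kappa>"
  shows "0 < rate_factor \<kappa> \<theta> \<Theta> k"
proof -
  have "0 < \<kappa> / \<sigma>s k * \<Theta> * (1 + sqrt (\<rho>s k))"
    using assms \<sigma>s_pos[of k] \<rho>s_nonneg[of k] by (simp add: add_pos_nonneg)
  moreover have "0 \<le> sqrt (\<rho>s k) * sqrt \<Theta> / sqrt \<theta>"
    using assms \<rho>s_nonneg[of k] by simp
  ultimately show ?thesis
    using assms unfolding rate_factor_def by (simp add: add_nonneg_pos)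
qed

lemma bregman_dist_next_le:
  assumes "0 < \<theta>" "\<theta> \<le> \<Theta>" "0 < \<kappa>" and ball: "cball zb \<epsilon> \<subseteq> U"
    and lip: "\<And>a b. a \<in> cball zb \<epsilon> \<Longrightarrow> b \<in> cball zb \<epsilon> \<Longrightarrow> norm (G a - G b) \<le> \<Theta> * norm (a - b)"
    and lower: "\<And>a b. a \<in> cball zb \<epsilon> \<Longrightarrow> b \<in> cball zb \<epsilon> \<Longrightarrow> \<theta> / 2 * (norm (a - b))\<^sup>2 \<le> D a b"
    and upper: "\<And>a b. a \<in> cball zb \<epsilon> \<Longrightarrow> b \<in> cball zb \<epsilon> \<Longrightarrow> D a b \<le> \<Theta> / 2 * (norm (a - b))\<^sup>2"
    and "zb \<in> zer T" "z k \<in> cball zb \<epsilon>" "z (Suc k) \<in> cball zb \<epsilon>" "p k \<in> cball zb (\<epsilon> / 2)"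
    and eb: "infdist (p k) (zer T) \<le> \<kappa> * norm (w k)"
  shows "ereal (1 / rate_factor \<kappa> \<theta> \<Theta> k) * bregman_dist \<Phi> (z (Suc k)) (zer T)
    \<le> bregman \<Phi> (p k) (z k)"
proof -
  obtain x where x: "x \<in> zer T" "infdist (p k) (zer T) = dist (p k) x"
    using infdist_attains_inf[OF closed_zer_maximal_monotone[OF maximal_monotone_T]]
      \<open>zb \<in> zer T\<close> by blast
  have "dist (p k) x \<le> \<epsilon> / 2"
    using infdist_le[OF \<open>zb \<in> zer T\<close>, of "p k"] x(2) \<open>p k \<in> cball zb (\<epsilon> / 2)\<close>
    by (simp add: dist_commute)
  then have "dist zb x \<le> \<epsilon>"
    using dist_triangle[of zb x "p k"] \<open>p k \<in> cball zb (\<epsilon> / 2)\<close> by simp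
  then have "x \<in> cball zb \<epsilon>" "0 \<le> \<epsilon>"
    using zero_le_dist[of zb x] by (simp, linarith)
  moreover have "p k \<in> cball zb \<epsilon>"
    using \<open>p k \<in> cball zb (\<epsilon> / 2)\<close> \<open>0 \<le> \<epsilon>\<close> by simp
  moreover have "norm (x - p k) \<le> \<kappa> * norm (w k)"
    using eb x(2) by (simp add: dist_norm norm_minus_commute)
  ultimately have D_le: "D x (z (Suc k)) \<le> rate_factor \<kappa> \<theta> \<Theta> k * D (p k) (z k)"
    using D_next_le_rate_factor[OF assms(1,2) less_imp_le[OF \<open>0 < \<kappa>\<close>] \<open>z k \<in> cball zb \<epsilon>\<close>
        \<open>z (Suc k) \<in> cball zb \<epsilon>\<close> _ _ lip lower upper] by blast
  have "bregman_dist \<Phi> (z (Suc k)) (zer T) \<le> bregman \<Phi> x (z (Suc k))"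
    unfolding bregman_dist_def by (rule INF_lower[OF x(1)])
  also have "\<dots> \<le> ereal (rate_factor \<kappa> \<theta> \<Theta> k * D (p k) (z k))"
    using bregman_eq_D \<open>x \<in> cball zb \<epsilon>\<close> ball U_subset_edom z_in_U D_le by (auto simp: subset_iff)
  finally have "ereal (1 / rate_factor \<kappa> \<theta> \<Theta> k) * bregman_dist \<Phi> (z (Suc k)) (zer T)
      \<le> ereal (1 / rate_factor \<kappa> \<theta> \<Theta> k) * ereal (rate_factor \<kappa> \<theta> \<Theta> k * D (p k) (z k))"
    using rate_factor_pos[OF assms(1-3), of k] by (intro ereal_mult_left_mono) auto
  also have "\<dots> = bregman \<Phi> (p k) (z k)"
    using rate_factor_pos[OF assms(1-3), of k] bregman_eq_D[OF p_in_edom z_in_U] by simp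
  finally show ?thesis .
qed

lemma error_bound_rate:
  assumes "z \<longlonglongrightarrow> zb" "zb \<in> zer T" "zb \<in> U" and eb: "error_bound T zb \<delta> \<kappa>"
  shows "\<exists>\<epsilon>>0. cball zb \<epsilon> \<subseteq> U \<and>
    (\<exists>\<theta> \<Theta>. 0 < \<theta> \<and>
      (\<forall>a\<in>cball zb \<epsilon>. \<forall>b\<in>cball zb \<epsilon>.
         norm (G a - G b) \<le> \<Theta> * norm (a - b) \<and> bregman \<Phi> a b \<ge> ereal (\<theta> / 2 * (norm (a - b))\<^sup>2)) \<and>
      (\<exists>k0. \<forall>k\<ge>k0. ereal (1 / rate_factor \<kappa> \<theta> \<Theta> k) * bregman_dist \<Phi> (z (Suc k)) (zer T)
         \<le> bregman \<Phi> (p k) (z k)))"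
proof -
  have "0 < \<delta>" "0 < \<kappa>"
    and EB: "\<And>x v. v \<in> T x \<Longrightarrow> norm (x - zb) \<le> \<delta> \<Longrightarrow> norm v \<le> \<delta>
      \<Longrightarrow> infdist x (zer T) \<le> \<kappa> * norm v"
    using eb unfolding error_bound_def by auto
  obtain \<epsilon> where \<epsilon>: "0 < \<epsilon>" "cball zb \<epsilon> \<subseteq> U"
    using open_interior \<open>zb \<in> U\<close> open_contains_cball by blast
  then obtain \<theta> \<Theta> where \<theta>: "0 < \<theta>" "\<theta> \<le> \<Theta>"
    and lip: "\<And>a b. a \<in> cball zb \<epsilon> \<Longrightarrow> b \<in> cball zb \<epsilon> \<Longrightarrow> norm (G a - G b) \<le> \<Theta> * norm (a - b)"
    and lower: "\<And>a b. a \<in> cball zb \<epsilon> \<Longrightarrow> b \<in> cball zb \<epsilon> \<Longrightarrow> \<theta> / 2 * (norm (a - b))\<^sup>2 \<le> D a b"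
    and upper: "\<And>a b. a \<in> cball zb \<epsilon> \<Longrightarrow> b \<in> cball zb \<epsilon> \<Longrightarrow> D a b \<le> \<Theta> / 2 * (norm (a - b))\<^sup>2"
    using local_quadratic_bounds[OF \<epsilon>] by blast
  have "p \<longlonglongrightarrow> zb" "(\<lambda>k. z (Suc k)) \<longlonglongrightarrow> zb" "w \<longlonglongrightarrow> 0"
    using companions_converge[of id zb] \<open>z \<longlonglongrightarrow> zb\<close> \<open>zb \<in> U\<close> by (simp_all add: strict_mono_def)
  then have "eventually (\<lambda>k. z k \<in> cball zb \<epsilon> \<and> z (Suc k) \<in> cball zb \<epsilon> \<and> p k \<in> cball zb (\<epsilon> / 2)
      \<and> p k \<in> cball zb \<delta> \<and> w k \<in> cball 0 \<delta>) sequentially"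
    using \<open>z \<longlonglongrightarrow> zb\<close> \<epsilon>(1) \<open>0 < \<delta>\<close> by (intro eventually_conj eventually_in_cball) auto
  then obtain k0 where k0: "\<And>k. k0 \<le> k \<Longrightarrow> z k \<in> cball zb \<epsilon> \<and> z (Suc k) \<in> cball zb \<epsilon>
      \<and> p k \<in> cball zb (\<epsilon> / 2) \<and> p k \<in> cball zb \<delta> \<and> w k \<in> cball 0 \<delta>"
    unfolding eventually_sequentially by blast
  have "ereal (1 / rate_factor \<kappa> \<theta> \<Theta> k) * bregman_dist \<Phi> (z (Suc k)) (zer T) \<le> bregman \<Phi> (p k) (z k)"
    if "k0 \<le> k" for k
  proof -
    have k: "z k \<in> cball zb \<epsilon>" "z (Suc k) \<in> cball zb \<epsilon>" "p k \<in> cball zb (\<epsilon> / 2)"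
      "norm (p k - zb) \<le> \<delta>" "norm (w k) \<le> \<delta>"
      using k0[OF that] by (simp_all add: dist_norm norm_minus_commute)
    show ?thesis
      using bregman_dist_next_le[OF \<theta> \<open>0 < \<kappa>\<close> \<epsilon>(2) lip lower upper \<open>zb \<in> zer T\<close> k(1-3)
          EB[OF w_in_T k(4,5)]] .
  qed
  moreover have "bregman \<Phi> a b \<ge> ereal (\<theta> / 2 * (norm (a - b))\<^sup>2)"
    if "a \<in> cball zb \<epsilon>" "b \<in> cball zb \<epsilon>" for a b
    using bregman_eq_D lower[OF that] that \<epsilon>(2) U_subset_edom by (auto simp: subset_iff)
  ultimately show ?thesis
    using \<epsilon> \<theta>(1) lip by blast
qed

end

theorem mainTheorem7:
  fixes \<Phi> :: "'a::euclidean_space \<Rightarrow> ereal"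
    and T :: "'a \<Rightarrow> 'a set"
    and \<sigma>s \<rho>s :: "nat \<Rightarrow> real" and \<sigma> \<rho> :: real
    and z p w :: "nat \<Rightarrow> 'a"
    and zstar :: 'a
  assumes leg: "legendre \<Phi>"
    and C2: "C2_int_dom \<Phi>"
    and vsc: "very_strictly_convex \<Phi>"
    and mm: "maximal_monotone T"
    and domT: "interior (edom \<Phi>) \<inter> dom_op T \<noteq> {}"
    and sigma: "\<sigma> > 0" "\<And>k. \<sigma>s k \<ge> \<sigma>"
    and rho: "\<And>k. 0 \<le> \<rho>s k" "\<And>k. \<rho>s k \<le> \<rho>" "\<rho> < 1"
    and alg: "inexact_bppa \<Phi> T \<sigma>s \<rho>s z p w"
    and zer_int: "zer T \<inter> interior (edom \<Phi>) \<noteq> {}"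
    and zstar: "zstar \<in> edom \<Phi> \<inter> zer T"
    and coer: "coercive (\<lambda>y. bregman \<Phi> zstar y)"
  shows "\<exists>zinf \<in> zer T \<inter> interior (edom \<Phi>). z \<longlonglongrightarrow> zinf \<and>
    (\<forall>\<delta> \<kappa>. error_bound T zinf \<delta> \<kappa> \<longrightarrow>
      (\<exists>\<epsilon>>0. cball zinf \<epsilon> \<subseteq> interior (edom \<Phi>) \<and>
        (\<exists>\<theta> \<Theta>. 0 < \<theta> \<and>
          (\<forall>a\<in>cball zinf \<epsilon>. \<forall>b\<in>cball zinf \<epsilon>.
             norm (egrad \<Phi> a - egrad \<Phi> b) \<le> \<Theta> * norm (a - b) \<and>
             bregman \<Phi> a b \<ge> ereal (\<theta> / 2 * (norm (a - b))\<^sup>2)) \<and>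
          (\<exists>k0. \<forall>k\<ge>k0.
             ereal (1 / ((sqrt (\<rho>s k) * sqrt \<Theta> / sqrt \<theta>
                        + \<kappa> / \<sigma>s k * \<Theta> * (1 + sqrt (\<rho>s k)))\<^sup>2 * (\<Theta> / \<theta>)))
               * bregman_dist \<Phi> (z (Suc k)) (zer T)
             \<le> bregman \<Phi> (p k) (z k)))))"
proof -
  interpret inexact_bppa_run \<Phi> T \<sigma>s \<rho>s \<sigma> \<rho> z p w
    using leg C2 vsc mm sigma rho alg zstar by unfold_locales auto
  obtain zinf where zinf: "zinf \<in> zer T" "zinf \<in> interior (edom \<Phi>)" "z \<longlonglongrightarrow> zinf"
    using iterates_converge zstar coer zer_int by blast
  show ?thesis
    by (intro bexI[of _ zinf] conjI allI impI error_bound_rate[OF zinf(3,1,2), unfolded rate_factor_def])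
      (use zinf in auto)
qed

end
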